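(* Let $g\ge1$, $0\le g'<g$, $g''=g-g'$, fix Siegel sets $\mathfrak{F}_g(u)$, $\mathfrak{F}_{g'}(u)$, $\mathfrak{F}^+_{g''}(u)$, and fix $(\tau',t)\in\mathfrak{F}_{g'}(u)\times\mathfrak{F}^+_{g''}(u)$. There exists a constant $C>0$, depending only on the Siegel set data and on $\tau'$, such that for every $\tau\in\pi_{g'}^{-1}(\tau',t)\cap\mathfrak{F}_g(u)$ and every vertical tangent vector $V=V_X+iV_Y\in T_\tau\mathfrak{S}_g$ (i.e. $d\pi_{g'}(V)=0$), $$\|V\|_\tau^2\le\frac{C}{\lambda_{\min}(t)}\Big(\|V'''_X\|_{\mathcal F}^2+\|V'''_Y\|_{\mathcal F}^2\Big)+\frac{C}{\lambda_{\min}(t)^2}\|V''_X\|_{\mathcal F}^2,$$ where $\lambda_{\min}(t)$ is the smallest eigenvalue of $t$ and $\|\cdot\|_{\mathcal F}$ is the Frobenius norm.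
   Context: $\mathfrak{S}_g=\{\tau\in\mathrm{Sym}(g,\mathbb{C}):\operatorname{Im}\tau>0\}$, $\tau=X+iY$. The Weil–Petersson norm of $V=V_X+iV_Y\in\mathrm{Sym}(g,\mathbb{C})\cong T_\tau\mathfrak{S}_g$ is $\|V\|_\tau^2=\frac12\big(\operatorname{tr}(Y^{-1}V_XY^{-1}V_X)+\operatorname{tr}(Y^{-1}V_YY^{-1}V_Y)\big)$. Block decompositions: $\tau=\begin{pmatrix}\tau'&\tau'''\\{}^t\tau'''&\tau''\end{pmatrix}$ with $\tau'$ of size $g'\times g'$ and $\tau''$ of size $g''\times g''$; the same for $X,Y,V_X,V_Y$. The map $\pi_{g'}:\mathfrak{S}_g\to\mathfrak{S}_{g'}\times\mathrm{Sym}^+(g'',\mathbb{R})$ is $\pi_{g'}(\tau)=(\tau',\,Y''-{}^tY'''(Y')^{-1}Y''')$. Jacobi decomposition $Y=LDL^t$, $L=(l_{ij})$ lower triangular unipotent, $D=\mathrm{diag}(d_1,\dots,d_g)$; Siegel sets $\mathfrak{F}_g(u)=\{X+iY: |x_{ij}|<u,\ |l_{ij}|<u,\ 1<ud_1,\ d_i<ud_{i+1}\}$ and $\mathfrak{F}^+_g(u)=\{Y\in\mathrm{Sym}^+(g,\mathbb{R}): |l_{ij}|<u,\ 1<ud_1,\ d_i<ud_{i+1}\}$. *)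

theory Defs
  imports Complex_Main "Jordan_Normal_Form.Matrix" "Jordan_Normal_Form.Char_Poly"
begin

(* A point tau = X + iY of the
   Siegel upper half space is represented by the pair (X, Y) of real g x g matrices,
   a tangent vector V = V_X + i V_Y by the pair (V_X, V_Y). *)

definition sym_mat :: "nat \<Rightarrow> real mat \<Rightarrow> bool" where
  "sym_mat n A \<longleftrightarrow> A \<in> carrier_mat n n \<and> transpose_mat A = A"

definition pos_def_mat :: "nat \<Rightarrow> real mat \<Rightarrow> bool" where
  "pos_def_mat n A \<longleftrightarrow> sym_mat n A \<and>
     (\<forall>v \<in> carrier_vec n. v \<noteq> 0\<^sub>v n \<longrightarrow> scalar_prod v (A *\<^sub>v v) > 0)"

definition siegel_space :: "nat \<Rightarrow> real mat \<Rightarrow> real mat \<Rightarrow> bool" where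
  "siegel_space n X Y \<longleftrightarrow> sym_mat n X \<and> pos_def_mat n Y"

definition minv :: "real mat \<Rightarrow> real mat" where
  "minv A = (THE B. B \<in> carrier_mat (dim_row A) (dim_row A) \<and>
                    A * B = 1\<^sub>m (dim_row A) \<and> B * A = 1\<^sub>m (dim_row A))"

definition mtrace :: "real mat \<Rightarrow> real" where
  "mtrace A = (\<Sum>i<dim_row A. A $$ (i, i))"

definition frob2 :: "real mat \<Rightarrow> real" where
  "frob2 A = (\<Sum>i<dim_row A. \<Sum>j<dim_col A. (A $$ (i, j))\<^sup>2)"

definition lambda_min :: "real mat \<Rightarrow> real" where
  "lambda_min A = Min {k. eigenvalue A k}"

(* block decomposition with respect to k = g' :  A = (A', A'''; A'''^t, A'') *)
definition blk1 :: "nat \<Rightarrow> real mat \<Rightarrow> real mat" where   (* A'   *)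
  "blk1 k A = mat k k (\<lambda>(i, j). A $$ (i, j))"
definition blk3 :: "nat \<Rightarrow> real mat \<Rightarrow> real mat" where   (* A''' *)
  "blk3 k A = mat k (dim_col A - k) (\<lambda>(i, j). A $$ (i, j + k))"
definition blk2 :: "nat \<Rightarrow> real mat \<Rightarrow> real mat" where   (* A''  *)
  "blk2 k A = mat (dim_row A - k) (dim_col A - k) (\<lambda>(i, j). A $$ (i + k, j + k))"

(* second component of pi_{g'}: Y'' - (Y''')^t (Y')^{-1} Y''' *)
definition schur :: "nat \<Rightarrow> real mat \<Rightarrow> real mat" where
  "schur k Y = blk2 k Y - transpose_mat (blk3 k Y) * minv (blk1 k Y) * blk3 k Y"

(* d pi_{g'}(V) = 0 at tau = X + iY, expressed through the directional derivatives
   of all real components of pi_{g'}(tau) = (X' + i Y', schur(Y)) along V *)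
definition vertical :: "nat \<Rightarrow> real mat \<Rightarrow> real mat \<Rightarrow> real mat \<Rightarrow> real mat \<Rightarrow> bool" where
  "vertical k X Y VX VY \<longleftrightarrow>
     (\<forall>i<k. \<forall>j<k.
        ((\<lambda>s. blk1 k (X + s \<cdot>\<^sub>m VX) $$ (i, j)) has_real_derivative 0) (at 0) \<and>
        ((\<lambda>s. blk1 k (Y + s \<cdot>\<^sub>m VY) $$ (i, j)) has_real_derivative 0) (at 0)) \<and>
     (\<forall>i<dim_row Y - k. \<forall>j<dim_row Y - k.
        ((\<lambda>s. schur k (Y + s \<cdot>\<^sub>m VY) $$ (i, j)) has_real_derivative 0) (at 0))"

definition wp_norm2 :: "real mat \<Rightarrow> real mat \<Rightarrow> real mat \<Rightarrow> real" where
  "wp_norm2 Y VX VY = (1/2) * (mtrace (minv Y * VX * minv Y * VX) + mtrace (minv Y * VY * minv Y * VY))"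

definition jacobi_siegel :: "nat \<Rightarrow> real \<Rightarrow> real mat \<Rightarrow> bool" where
  "jacobi_siegel n u Y \<longleftrightarrow>
     (\<exists>L D. L \<in> carrier_mat n n \<and> D \<in> carrier_mat n n \<and>
        (\<forall>i<n. L $$ (i, i) = 1) \<and> (\<forall>i j. i < j \<and> j < n \<longrightarrow> L $$ (i, j) = 0) \<and>
        diagonal_mat D \<and> Y = L * D * transpose_mat L \<and>
        (\<forall>i j. j < i \<and> i < n \<longrightarrow> \<bar>L $$ (i, j)\<bar> < u) \<and>
        (0 < n \<longrightarrow> 1 < u * D $$ (0, 0)) \<and>
        (\<forall>i. Suc i < n \<longrightarrow> D $$ (i, i) < u * D $$ (Suc i, Suc i)))"

definition siegel_set_plus :: "nat \<Rightarrow> real \<Rightarrow> real mat \<Rightarrow> bool" where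
  "siegel_set_plus n u Y \<longleftrightarrow> pos_def_mat n Y \<and> jacobi_siegel n u Y"

definition siegel_set :: "nat \<Rightarrow> real \<Rightarrow> real mat \<Rightarrow> real mat \<Rightarrow> bool" where
  "siegel_set n u X Y \<longleftrightarrow> siegel_space n X Y \<and>
     (\<forall>i<n. \<forall>j<n. \<bar>X $$ (i, j)\<bar> < u) \<and> jacobi_siegel n u Y"

end

theory Submission
  imports Defs
begin

text \<open>Write \<open>A = Y'\<^sup>-\<^sup>1Y'''\<close> and \<open>E = (1, A; 0, 1)\<close>. Completing the square gives
  \<open>Y = E\<^sup>T diag(Y', t) E\<close> with \<open>t\<close> the Schur complement. A vertical \<open>V\<close> has \<open>V' = 0\<close>, hence
  \<open>V = E\<^sup>T W E\<close> with \<open>W = (0, V'''; V'''\<^sup>T, C)\<close>, and for \<open>V\<^sub>Y\<close> the condition \<open>d\<pi>(V) = 0\<close> says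
  exactly \<open>C = 0\<close>. Therefore \<open>tr(Y\<^sup>-\<^sup>1VY\<^sup>-\<^sup>1V) = tr(D\<^sup>-\<^sup>1WD\<^sup>-\<^sup>1W)\<close> for \<open>D = diag(Y', t)\<close>, which is
  at most \<open>2\<parallel>V'''\<parallel>\<^sup>2/(\<lambda>\<^sub>m\<^sub>i\<^sub>n(Y')\<lambda>\<^sub>m\<^sub>i\<^sub>n(t)) + \<parallel>C\<parallel>\<^sup>2/\<lambda>\<^sub>m\<^sub>i\<^sub>n(t)\<^sup>2\<close>. On Siegel sets
  \<open>\<lambda>\<^sub>m\<^sub>i\<^sub>n(t) \<ge> c > 0\<close> and the entries of \<open>Y'''\<close> are bounded by the diagonal of the fixed \<open>Y'\<close>;
  so \<open>\<parallel>A\<parallel>\<close> is bounded, \<open>\<parallel>C\<^sub>X\<parallel>\<^sup>2\<close> is controlled by \<open>\<parallel>V''\<^sub>X\<parallel>\<^sup>2 + \<parallel>V'''\<^sub>X\<parallel>\<^sup>2\<close>, and the resulting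
  term \<open>\<parallel>V'''\<^sub>X\<parallel>\<^sup>2/\<lambda>\<^sub>m\<^sub>i\<^sub>n(t)\<^sup>2\<close> is at most \<open>\<parallel>V'''\<^sub>X\<parallel>\<^sup>2/(c \<lambda>\<^sub>m\<^sub>i\<^sub>n(t))\<close>.\<close>

lemma index_mult_mat_sum:
  assumes "A \<in> carrier_mat n m" "B \<in> carrier_mat m p" "i < n" "k < p"
  shows "(A * B) $$ (i, k) = (\<Sum>j<m. A $$ (i, j) * B $$ (j, k))"
  using assms by (auto simp: scalar_prod_def lessThan_atLeast0 intro!: sum.cong)

lemma sym_mat_entry:
  assumes "sym_mat n A" "i < n" "j < n"
  shows "A $$ (i, j) = A $$ (j, i)"
  using assms unfolding sym_mat_def by (metis carrier_matD index_transpose_mat(1))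

lemma minv_eqI:
  assumes A: "(A::real mat) \<in> carrier_mat n n" and B: "B \<in> carrier_mat n n" and AB: "A * B = 1\<^sub>m n"
  shows "minv A = B"
proof -
  have BA: "B * A = 1\<^sub>m n" using mat_mult_left_right_inverse[OF A B AB] .
  have dr: "dim_row A = n" using A by auto
  show ?thesis unfolding minv_def dr
  proof (rule the_equality)
    show "B \<in> carrier_mat n n \<and> A * B = 1\<^sub>m n \<and> B * A = 1\<^sub>m n" using B AB BA by auto
  next
    fix B' assume B': "B' \<in> carrier_mat n n \<and> A * B' = 1\<^sub>m n \<and> B' * A = 1\<^sub>m n"
    have "B' = B' * (A * B)" using AB B' by auto
    also have "\<dots> = (B' * A) * B" using B' A B by (metis assoc_mult_mat)
    also have "\<dots> = B" using B' B by auto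
    finally show "B' = B" .
  qed
qed

lemma minv_inverse:
  assumes A: "(A::real mat) \<in> carrier_mat n n" and d: "det A \<noteq> 0"
  shows "minv A \<in> carrier_mat n n" "A * minv A = 1\<^sub>m n" "minv A * A = 1\<^sub>m n"
proof -
  obtain B where B: "B \<in> carrier_mat n n" "A * B = 1\<^sub>m n" "B * A = 1\<^sub>m n"
    using det_non_zero_imp_unit[OF A d, of undefined] unfolding Units_def ring_mat_def by auto
  then show "minv A \<in> carrier_mat n n" "A * minv A = 1\<^sub>m n" "minv A * A = 1\<^sub>m n"
    using minv_eqI[OF A B(1,2)] by auto
qed

lemma sym_mat_minv:
  assumes S: "sym_mat n A" and d: "det A \<noteq> 0"
  shows "sym_mat n (minv A)"
proof -
  have A: "A \<in> carrier_mat n n" and At: "transpose_mat A = A" using S unfolding sym_mat_def by auto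
  note inv = minv_inverse[OF A d]
  have "A * transpose_mat (minv A) = transpose_mat (minv A * A)"
    using transpose_mult[OF inv(1) A] At by simp
  also have "\<dots> = 1\<^sub>m n" using inv by simp
  finally have "minv A = transpose_mat (minv A)" using minv_eqI[OF A] inv(1) by auto
  then show ?thesis using inv(1) unfolding sym_mat_def by simp
qed

lemma pos_def_det_nonzero:
  assumes "pos_def_mat n A"
  shows "det A \<noteq> 0"
proof
  assume "det A = 0"
  have A: "A \<in> carrier_mat n n" using assms unfolding pos_def_mat_def sym_mat_def by auto
  from \<open>det A = 0\<close> obtain v where v: "v \<in> carrier_vec n" "v \<noteq> 0\<^sub>v n" "A *\<^sub>v v = 0\<^sub>v n"
    using det_0_iff_vec_prod_zero_field[OF A] by auto
  then have "v \<bullet> (A *\<^sub>v v) > 0" using assms unfolding pos_def_mat_def by auto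
  with v show False by simp
qed

section \<open>Quadratic forms and the smallest eigenvalue\<close>

text \<open>Vectors of length \<open>n\<close> are modelled as functions \<open>nat \<Rightarrow> real\<close>, of which only the
  first \<open>n\<close> values matter.\<close>

definition quad_form :: "nat \<Rightarrow> real mat \<Rightarrow> (nat \<Rightarrow> real) \<Rightarrow> real" where
  "quad_form n A x = (\<Sum>i<n. \<Sum>j<n. x i * A $$ (i, j) * x j)"

definition bilin_form :: "nat \<Rightarrow> real mat \<Rightarrow> (nat \<Rightarrow> real) \<Rightarrow> (nat \<Rightarrow> real) \<Rightarrow> real" where
  "bilin_form n A x y = (\<Sum>i<n. \<Sum>j<n. x i * A $$ (i, j) * y j)"

definition sq_norm :: "nat \<Rightarrow> (nat \<Rightarrow> real) \<Rightarrow> real" where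
  "sq_norm n x = (\<Sum>i<n. (x i)\<^sup>2)"

definition rayleigh_ge :: "nat \<Rightarrow> real mat \<Rightarrow> real \<Rightarrow> bool" where
  "rayleigh_ge n A c \<longleftrightarrow> (\<forall>x. c * sq_norm n x \<le> quad_form n A x)"

lemma sq_norm_nonneg: "0 \<le> sq_norm n x"
  unfolding sq_norm_def by (auto intro: sum_nonneg)

lemma component_sq_le_sq_norm: "i < n \<Longrightarrow> (x i)\<^sup>2 \<le> sq_norm n x"
  unfolding sq_norm_def by (rule member_le_sum) auto

lemma sq_norm_eq_0_component: "sq_norm n x = 0 \<Longrightarrow> i < n \<Longrightarrow> x i = 0"
  using component_sq_le_sq_norm[of i n x] by simp

lemma quad_form_zero: "(\<And>i. i < n \<Longrightarrow> x i = 0) \<Longrightarrow> quad_form n A x = 0"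
  unfolding quad_form_def by simp

lemma scalar_prod_mult_mat_vec:
  assumes A: "A \<in> carrier_mat n n" and v: "v \<in> carrier_vec n"
  shows "v \<bullet> (A *\<^sub>v v) = quad_form n A (($) v)"
  using A v unfolding quad_form_def
  by (auto simp: scalar_prod_def lessThan_atLeast0 sum_distrib_left mult.assoc intro!: sum.cong)

lemma scalar_prod_self_sq_norm: "v \<in> carrier_vec n \<Longrightarrow> v \<bullet> v = sq_norm n (($) v)"
  unfolding sq_norm_def scalar_prod_def by (auto simp: lessThan_atLeast0 power2_eq_square)

lemma pos_def_quad_form_pos:
  assumes pd: "pos_def_mat n A" and "i < n" "x i \<noteq> 0"
  shows "0 < quad_form n A x"
proof -
  have A: "A \<in> carrier_mat n n" using pd unfolding pos_def_mat_def sym_mat_def by auto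
  have "vec n x \<noteq> 0\<^sub>v n" using assms(2,3) by (metis index_vec index_zero_vec(1))
  then have "0 < vec n x \<bullet> (A *\<^sub>v vec n x)" using pd unfolding pos_def_mat_def by auto
  also have "\<dots> = quad_form n A x"
    unfolding scalar_prod_mult_mat_vec[OF A vec_carrier] quad_form_def by (auto intro!: sum.cong)
  finally show ?thesis .
qed

lemma pos_def_quad_form_nonneg: "pos_def_mat n A \<Longrightarrow> 0 \<le> quad_form n A x"
  by (metis less_eq_real_def pos_def_quad_form_pos quad_form_zero)

lemma quad_form_add_scaled:
  assumes "sym_mat n A"
  shows "quad_form n A (\<lambda>i. x i + r * y i) = quad_form n A x + 2 * r * bilin_form n A x y + r\<^sup>2 * quad_form n A y"
proof -
  have "bilin_form n A y x = bilin_form n A x y"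
    unfolding bilin_form_def using sym_mat_entry[OF assms]
    by (subst sum.swap) (auto intro!: sum.cong)
  moreover have "quad_form n A (\<lambda>i. x i + r * y i)
      = quad_form n A x + r * bilin_form n A x y + r * bilin_form n A y x + r\<^sup>2 * quad_form n A y"
    unfolding quad_form_def bilin_form_def
    by (simp add: algebra_simps power2_eq_square sum.distrib sum_distrib_left)
  ultimately show ?thesis by simp
qed

lemma quadratic_nonneg_discriminant:
  fixes a b c :: real
  assumes nonneg: "\<And>r. 0 \<le> a + 2 * r * b + r\<^sup>2 * c" and "0 \<le> c"
  shows "b\<^sup>2 \<le> a * c"
proof (cases "c = 0")
  case True
  show ?thesis
  proof (rule ccontr)
    assume "\<not> ?thesis"
    then have "b \<noteq> 0" using True by simp
    with nonneg[of "-(a + 1) / (2 * b)"] True show False by (simp add: field_simps)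
  qed
next
  case False
  then have c: "0 < c" using assms by simp
  have "a + 2 * (-b/c) * b + (-b/c)\<^sup>2 * c = a - b\<^sup>2 / c"
    using c by (simp add: field_simps power2_eq_square)
  then have "0 \<le> a - b\<^sup>2 / c" using nonneg[of "-b/c"] by simp
  then show ?thesis using c by (simp add: field_simps)
qed

lemma psd_cauchy_schwarz:
  assumes "sym_mat n A" "\<And>z. 0 \<le> quad_form n A z"
  shows "(bilin_form n A x y)\<^sup>2 \<le> quad_form n A x * quad_form n A y"
  by (rule quadratic_nonneg_discriminant) (use quad_form_add_scaled[OF assms(1)] assms(2) in metis)+

lemma sum_mult_right_inverse:
  assumes A: "(A::real mat) \<in> carrier_mat n n" and B: "B \<in> carrier_mat n n" and AB: "A * B = 1\<^sub>m n"
    and i: "i < n"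
  shows "(\<Sum>j<n. A $$ (i, j) * (\<Sum>k<n. B $$ (j, k) * x k)) = x i"
proof -
  have "(\<Sum>j<n. A $$ (i, j) * (\<Sum>k<n. B $$ (j, k) * x k)) = (\<Sum>j<n. \<Sum>k<n. A $$ (i, j) * B $$ (j, k) * x k)"
    by (simp add: sum_distrib_left mult.assoc)
  also have "\<dots> = (\<Sum>k<n. (\<Sum>j<n. A $$ (i, j) * B $$ (j, k)) * x k)"
    by (subst sum.swap) (simp add: sum_distrib_right)
  also have "\<dots> = (\<Sum>k<n. (A * B) $$ (i, k) * x k)"
    using index_mult_mat_sum[OF A B i] by auto
  also have "\<dots> = (\<Sum>k<n. (if i = k then x k else 0))" using AB i by (intro sum.cong) auto
  also have "\<dots> = x i" using i by (simp add: sum.delta)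
  finally show ?thesis .
qed

lemma abs_quad_form_le: "\<bar>quad_form n B x\<bar> \<le> (\<Sum>i<n. \<Sum>j<n. \<bar>B $$ (i, j)\<bar>) * sq_norm n x"
proof -
  have prod_le: "\<bar>x i * x j\<bar> \<le> sq_norm n x" if "i < n" "j < n" for i j
  proof -
    have "2 * \<bar>x i\<bar> * \<bar>x j\<bar> \<le> \<bar>x i\<bar>\<^sup>2 + \<bar>x j\<bar>\<^sup>2" by (rule sum_squares_bound)
    then show ?thesis using component_sq_le_sq_norm[of i n x] component_sq_le_sq_norm[of j n x] that
      by (simp add: abs_mult)
  qed
  have "\<bar>quad_form n B x\<bar> \<le> (\<Sum>i<n. \<Sum>j<n. \<bar>x i * B $$ (i, j) * x j\<bar>)"
    unfolding quad_form_def by (rule order_trans[OF sum_abs]) (auto intro!: sum_mono)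
  also have "\<dots> \<le> (\<Sum>i<n. \<Sum>j<n. \<bar>B $$ (i, j)\<bar> * sq_norm n x)"
  proof (intro sum_mono)
    fix i j assume "i \<in> {..<n}" "j \<in> {..<n}"
    then have "\<bar>B $$ (i, j)\<bar> * \<bar>x i * x j\<bar> \<le> \<bar>B $$ (i, j)\<bar> * sq_norm n x"
      using prod_le by (simp add: mult_left_mono)
    then show "\<bar>x i * B $$ (i, j) * x j\<bar> \<le> \<bar>B $$ (i, j)\<bar> * sq_norm n x"
      by (simp add: abs_mult algebra_simps)
  qed
  also have "\<dots> = (\<Sum>i<n. \<Sum>j<n. \<bar>B $$ (i, j)\<bar>) * sq_norm n x" by (simp add: sum_distrib_right)
  finally show ?thesis .
qed

lemma forms_mult_right_inverse:
  fixes x :: "nat \<Rightarrow> real"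
  assumes A: "(A::real mat) \<in> carrier_mat n n" and B: "B \<in> carrier_mat n n" and AB: "A * B = 1\<^sub>m n"
  defines "y \<equiv> \<lambda>i. \<Sum>k<n. B $$ (i, k) * x k"
  shows "bilin_form n A x y = sq_norm n x" "quad_form n A y = quad_form n B x"
proof -
  have Ay: "(\<Sum>j<n. A $$ (i, j) * y j) = x i" if "i < n" for i
    unfolding y_def using sum_mult_right_inverse[OF A B AB that] .
  have "bilin_form n A x y = (\<Sum>i<n. x i * (\<Sum>j<n. A $$ (i, j) * y j))"
    unfolding bilin_form_def by (simp add: sum_distrib_left mult.assoc)
  also have "\<dots> = sq_norm n x" unfolding sq_norm_def using Ay by (auto simp: power2_eq_square intro!: sum.cong)
  finally show "bilin_form n A x y = sq_norm n x" .
  have "quad_form n A y = (\<Sum>i<n. y i * (\<Sum>j<n. A $$ (i, j) * y j))"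
    unfolding quad_form_def by (simp add: sum_distrib_left mult.assoc)
  also have "\<dots> = (\<Sum>i<n. y i * x i)" using Ay by (auto intro!: sum.cong)
  also have "\<dots> = quad_form n B x"
    unfolding y_def quad_form_def by (auto simp: sum_distrib_left sum_distrib_right mult_ac intro!: sum.cong)
  finally show "quad_form n A y = quad_form n B x" .
qed

text \<open>Cauchy--Schwarz for the form of \<open>A\<close>, applied to \<open>x\<close> and \<open>y = A\<^sup>-\<^sup>1 x\<close>, gives
  \<open>\<parallel>x\<parallel>\<^sup>4 \<le> x\<^sup>TAx \<cdot> x\<^sup>TA\<^sup>-\<^sup>1x\<close>, and the last factor is at most a constant times \<open>\<parallel>x\<parallel>\<^sup>2\<close>.\<close>

lemma invertible_psd_rayleigh_ge:
  assumes S: "sym_mat n A" and psd: "\<And>z. 0 \<le> quad_form n A z" and d: "det A \<noteq> 0"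
  shows "\<exists>e>0. rayleigh_ge n A e"
proof -
  have A: "A \<in> carrier_mat n n" using S unfolding sym_mat_def by auto
  define B where "B = minv A"
  have B: "B \<in> carrier_mat n n" and AB: "A * B = 1\<^sub>m n"
    unfolding B_def using minv_inverse[OF A d] by auto
  define K where "K = (\<Sum>i<n. \<Sum>j<n. \<bar>B $$ (i, j)\<bar>)"
  have K0: "0 \<le> K" unfolding K_def by (auto intro: sum_nonneg)
  have sq_le: "sq_norm n x \<le> quad_form n A x * K" for x
  proof (cases "sq_norm n x = 0")
    case True
    then show ?thesis using psd[of x] K0 by simp
  next
    case False
    then have pos: "0 < sq_norm n x" using sq_norm_nonneg[of n x] by simp
    note inv = forms_mult_right_inverse[OF A B AB, of x]
    have "(sq_norm n x)\<^sup>2 \<le> quad_form n A x * quad_form n B x"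
      using psd_cauchy_schwarz[OF S psd, of x "\<lambda>i. \<Sum>k<n. B $$ (i, k) * x k"] inv by simp
    also have "\<dots> \<le> quad_form n A x * (K * sq_norm n x)"
      using order_trans[OF abs_ge_self abs_quad_form_le] psd[of x] unfolding K_def by (rule mult_left_mono)
    finally have "sq_norm n x * sq_norm n x \<le> (quad_form n A x * K) * sq_norm n x"
      by (simp add: power2_eq_square algebra_simps)
    then show ?thesis using pos by (rule mult_right_le_imp_le)
  qed
  have "1 / (K + 1) * sq_norm n x \<le> quad_form n A x" for x
  proof -
    have "sq_norm n x \<le> quad_form n A x * (K + 1)" using sq_le[of x] psd[of x] by (simp add: algebra_simps)
    then show ?thesis using K0 by (simp add: field_simps)
  qed
  then show ?thesis using K0 unfolding rayleigh_ge_def by (intro exI[of _ "1 / (K + 1)"]) auto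
qed

lemma rayleigh_ge_mono: "rayleigh_ge n A c \<Longrightarrow> c' \<le> c \<Longrightarrow> rayleigh_ge n A c'"
  unfolding rayleigh_ge_def by (meson mult_right_mono order_trans sq_norm_nonneg)

lemma quad_form_shift:
  assumes "A \<in> carrier_mat n n"
  shows "quad_form n (A + (-m) \<cdot>\<^sub>m 1\<^sub>m n) x = quad_form n A x - m * sq_norm n x"
proof -
  have "quad_form n (A + (-m) \<cdot>\<^sub>m 1\<^sub>m n) x
      = (\<Sum>i<n. \<Sum>j<n. x i * A $$ (i, j) * x j - (if i = j then m * (x i)\<^sup>2 else 0))"
    unfolding quad_form_def using assms by (auto simp: algebra_simps power2_eq_square intro!: sum.cong)
  also have "\<dots> = quad_form n A x - m * sq_norm n x"
    unfolding quad_form_def sq_norm_def by (simp add: sum_subtractf sum.delta sum_distrib_left)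
  finally show ?thesis .
qed

lemma eigenvector_quad_form:
  assumes A: "(A::real mat) \<in> carrier_mat n n" and v: "eigenvector A v k"
  shows "quad_form n A (($) v) = k * sq_norm n (($) v)" "0 < sq_norm n (($) v)"
proof -
  have vc: "v \<in> carrier_vec n" and v0: "v \<noteq> 0\<^sub>v n" and Av: "A *\<^sub>v v = k \<cdot>\<^sub>v v"
    using v A unfolding eigenvector_def by auto
  have "quad_form n A (($) v) = v \<bullet> (A *\<^sub>v v)" using scalar_prod_mult_mat_vec[OF A vc] by simp
  also have "\<dots> = k * sq_norm n (($) v)" using Av vc scalar_prod_self_sq_norm[OF vc] by simp
  finally show "quad_form n A (($) v) = k * sq_norm n (($) v)" .
  obtain i where "i < n" "v $ i \<noteq> 0" using v0 vc by (metis eq_vecI carrier_vecD index_zero_vec)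
  then show "0 < sq_norm n (($) v)"
    using sq_norm_eq_0_component sq_norm_nonneg by (metis less_eq_real_def)
qed

lemma rayleigh_ge_le_eigenvalue:
  assumes A: "(A::real mat) \<in> carrier_mat n n" and "rayleigh_ge n A c" and "eigenvalue A k"
  shows "c \<le> k"
proof -
  obtain v where v: "eigenvector A v k" using assms(3) unfolding eigenvalue_def by blast
  have "c * sq_norm n (($) v) \<le> k * sq_norm n (($) v)"
    using assms(2) eigenvector_quad_form(1)[OF A v] unfolding rayleigh_ge_def by metis
  then show ?thesis using eigenvector_quad_form(2)[OF A v] by simp
qed

text \<open>The optimal lower bound \<open>\<mu>\<close> of the Rayleigh quotient is an eigenvalue: otherwise
  \<open>A - \<mu>\<close> would be positive semidefinite and invertible, hence uniformly positive.\<close>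

lemma optimal_rayleigh_bound_eigenvalue:
  assumes S: "sym_mat n A" and low: "rayleigh_ge n A \<mu>"
    and opt: "\<And>e. 0 < e \<Longrightarrow> \<not> rayleigh_ge n A (\<mu> + e)"
  shows "eigenvalue A \<mu>"
proof (rule ccontr)
  assume not_ev: "\<not> eigenvalue A \<mu>"
  have A: "A \<in> carrier_mat n n" using S unfolding sym_mat_def by auto
  define M where "M = A + (-\<mu>) \<cdot>\<^sub>m 1\<^sub>m n"
  have dM: "det M \<noteq> 0" using not_ev eigenvalue_det[OF A] A unfolding M_def char_matrix_def by simp
  have SM: "sym_mat n M" using A sym_mat_entry[OF S] unfolding M_def sym_mat_def by (auto intro!: eq_matI)
  have qM: "quad_form n M x = quad_form n A x - \<mu> * sq_norm n x" for x
    unfolding M_def by (rule quad_form_shift[OF A])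
  have "0 \<le> quad_form n M x" for x using low qM unfolding rayleigh_ge_def by (metis diff_ge_0_iff_ge)
  then obtain e where "0 < e" "rayleigh_ge n M e" using invertible_psd_rayleigh_ge[OF SM _ dM] by blast
  then have "rayleigh_ge n A (\<mu> + e)" using qM unfolding rayleigh_ge_def by (simp add: algebra_simps)
  with opt \<open>0 < e\<close> show False by blast
qed

lemma finite_eigenvalues:
  assumes "(A::real mat) \<in> carrier_mat n n"
  shows "finite {k. eigenvalue A k}"
proof -
  have "char_poly A \<noteq> 0" using degree_monic_char_poly[OF assms] by auto
  then have "finite {k. poly (char_poly A) k = 0}" by (rule poly_roots_finite)
  then show ?thesis using eigenvalue_root_char_poly[OF assms] by simp
qed

lemma optimal_rayleigh_bound_exists:
  assumes pd: "pos_def_mat n A" and n: "1 \<le> n"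
  obtains \<mu> where "rayleigh_ge n A \<mu>" "\<And>e. 0 < e \<Longrightarrow> \<not> rayleigh_ge n A (\<mu> + e)"
proof -
  define \<mu> where "\<mu> = Sup {c. rayleigh_ge n A c}"
  define e0 where "e0 = (\<lambda>i::nat. if i = 0 then 1 else (0::real))"
  have "sq_norm n e0 = (\<Sum>i<n. if i = 0 then 1 else 0)" unfolding sq_norm_def e0_def by (rule sum.cong) auto
  also have "\<dots> = 1" using n by simp
  finally have "sq_norm n e0 = 1" .
  have bdd: "bdd_above {c. rayleigh_ge n A c}"
  proof (rule bdd_aboveI)
    fix c assume "c \<in> {c. rayleigh_ge n A c}"
    then have "c * sq_norm n e0 \<le> quad_form n A e0" unfolding rayleigh_ge_def by blast
    then show "c \<le> quad_form n A e0" using \<open>sq_norm n e0 = 1\<close> by simp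
  qed
  have "rayleigh_ge n A 0" using pos_def_quad_form_nonneg[OF pd] unfolding rayleigh_ge_def by simp
  then have ne: "{c. rayleigh_ge n A c} \<noteq> {}" by blast
  have "\<mu> * sq_norm n x \<le> quad_form n A x" for x
  proof (cases "sq_norm n x = 0")
    case True
    then show ?thesis using quad_form_zero sq_norm_eq_0_component by (metis mult_zero_right order_refl)
  next
    case False
    then have pos: "0 < sq_norm n x" using sq_norm_nonneg[of n x] by simp
    have "\<mu> \<le> quad_form n A x / sq_norm n x"
      unfolding \<mu>_def
    proof (rule cSup_least[OF ne])
      fix c assume "c \<in> {c. rayleigh_ge n A c}"
      then have "c * sq_norm n x \<le> quad_form n A x" unfolding rayleigh_ge_def by blast
      then show "c \<le> quad_form n A x / sq_norm n x" using pos by (simp add: pos_le_divide_eq)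
    qed
    then show ?thesis using pos by (simp add: pos_le_divide_eq)
  qed
  then have "rayleigh_ge n A \<mu>" unfolding rayleigh_ge_def by blast
  moreover have "\<not> rayleigh_ge n A (\<mu> + e)" if "0 < e" for e
    using cSup_upper[OF _ bdd, of "\<mu> + e"] that unfolding \<mu>_def by auto
  ultimately show ?thesis by (rule that)
qed

lemma lambda_min_rayleigh:
  assumes pd: "pos_def_mat n A" and n: "1 \<le> n"
  shows "rayleigh_ge n A (lambda_min A)" "rayleigh_ge n A c \<Longrightarrow> c \<le> lambda_min A"
proof -
  have S: "sym_mat n A" and A: "A \<in> carrier_mat n n" using pd unfolding pos_def_mat_def sym_mat_def by auto
  obtain \<mu> where low: "rayleigh_ge n A \<mu>" and opt: "\<And>e. 0 < e \<Longrightarrow> \<not> rayleigh_ge n A (\<mu> + e)"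
    using optimal_rayleigh_bound_exists[OF pd n] by blast
  have ev: "eigenvalue A \<mu>" by (rule optimal_rayleigh_bound_eigenvalue[OF S low opt])
  have "lambda_min A = \<mu>" unfolding lambda_min_def
    by (rule Min_eqI[OF finite_eigenvalues[OF A]]) (use rayleigh_ge_le_eigenvalue[OF A low] ev in auto)
  then show "rayleigh_ge n A (lambda_min A)" "rayleigh_ge n A c \<Longrightarrow> c \<le> lambda_min A"
    using low rayleigh_ge_le_eigenvalue[OF A _ ev] by auto
qed

section \<open>Jacobi decompositions on Siegel sets\<close>

lemma jacobi_siegelE:
  assumes u: "0 < u" and "jacobi_siegel n u Y"
  obtains L D where "L \<in> carrier_mat n n" "D \<in> carrier_mat n n" "diagonal_mat D"
    "Y = L * D * transpose_mat L" "\<And>i. i < n \<Longrightarrow> L $$ (i, i) = 1"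
    "\<And>i j. i < j \<Longrightarrow> j < n \<Longrightarrow> L $$ (i, j) = 0"
    "\<And>i j. i < n \<Longrightarrow> j < n \<Longrightarrow> \<bar>L $$ (i, j)\<bar> \<le> max 1 u"
    "\<And>m. m < n \<Longrightarrow> 1 / (max 1 u) ^ n \<le> D $$ (m, m)"
proof -
  obtain L D where LD: "L \<in> carrier_mat n n" "D \<in> carrier_mat n n" "diagonal_mat D"
    "Y = L * D * transpose_mat L" and d1: "\<forall>i<n. L $$ (i, i) = 1"
    and up: "\<forall>i j. i < j \<and> j < n \<longrightarrow> L $$ (i, j) = 0"
    and lb: "\<forall>i j. j < i \<and> i < n \<longrightarrow> \<bar>L $$ (i, j)\<bar> < u"
    and d0: "0 < n \<longrightarrow> 1 < u * D $$ (0, 0)"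
    and ds: "\<forall>i. Suc i < n \<longrightarrow> D $$ (i, i) < u * D $$ (Suc i, Suc i)"
    using assms(2) unfolding jacobi_siegel_def by blast
  have dlow: "1 / u ^ Suc m < D $$ (m, m)" if "m < n" for m
    using that
  proof (induction m)
    case 0
    then show ?case using d0 u by (simp add: field_simps)
  next
    case (Suc m)
    then have "1 / u ^ Suc m < u * D $$ (Suc m, Suc m)" using ds by force
    then show ?case using u by (simp add: field_simps)
  qed
  have "1 / (max 1 u) ^ n \<le> D $$ (m, m)" if "m < n" for m
  proof -
    have "1 / (max 1 u) ^ n \<le> 1 / (max 1 u) ^ Suc m" using that by (intro divide_left_mono power_increasing) auto
    also have "\<dots> \<le> 1 / u ^ Suc m" using u by (intro divide_left_mono power_mono) auto
    finally show ?thesis using dlow[OF that] by linarith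
  qed
  moreover have "\<bar>L $$ (i, j)\<bar> \<le> max 1 u" if "i < n" "j < n" for i j
  proof (cases i j rule: linorder_cases)
    case less
    then have "L $$ (i, j) = 0" using up that(2) by blast
    then show ?thesis by simp
  next
    case equal
    then have "L $$ (i, j) = 1" using d1 that(1) by blast
    then show ?thesis by simp
  next
    case greater
    then have "\<bar>L $$ (i, j)\<bar> < u" using lb that(1) by blast
    then show ?thesis by linarith
  qed
  ultimately show ?thesis using LD d1 up by (intro that[of L D]) auto
qed

definition nonneg_ldl :: "nat \<Rightarrow> real mat \<Rightarrow> bool" where
  "nonneg_ldl n T \<longleftrightarrow> (\<exists>L D. L \<in> carrier_mat n n \<and> D \<in> carrier_mat n n \<and> diagonal_mat D \<and>
     (\<forall>k<n. 0 \<le> D $$ (k, k)) \<and> T = L * D * transpose_mat L)"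

lemma jacobi_siegel_nonneg_ldl:
  assumes "0 < u" "jacobi_siegel n u T"
  shows "nonneg_ldl n T"
proof -
  obtain L D where "L \<in> carrier_mat n n" "D \<in> carrier_mat n n" "diagonal_mat D" "T = L * D * transpose_mat L"
    and dm: "\<And>m. m < n \<Longrightarrow> 1 / (max 1 u) ^ n \<le> D $$ (m, m)"
    by (rule jacobi_siegelE[OF assms]) blast
  moreover have "0 \<le> D $$ (m, m)" if "m < n" for m
  proof -
    have "0 < 1 / (max 1 u) ^ n" by simp
    then show ?thesis using dm[OF that] by linarith
  qed
  ultimately show ?thesis unfolding nonneg_ldl_def by blast
qed

lemma ldl_entry:
  assumes L: "(L::real mat) \<in> carrier_mat k n" and D: "D \<in> carrier_mat n n" and dg: "diagonal_mat D"
    and i: "i < k" and j: "j < k"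
  shows "(L * D * transpose_mat L) $$ (i, j) = (\<Sum>m<n. L $$ (i, m) * D $$ (m, m) * L $$ (j, m))"
proof -
  have LD: "(L * D) $$ (i, m) = L $$ (i, m) * D $$ (m, m)" if m: "m < n" for m
  proof -
    have "(L * D) $$ (i, m) = (\<Sum>p<n. if p = m then L $$ (i, m) * D $$ (m, m) else 0)"
      unfolding index_mult_mat_sum[OF L D i m]
      using dg D m unfolding diagonal_mat_def by (intro sum.cong) auto
    then show ?thesis using m by (simp add: sum.delta')
  qed
  have "(L * D * transpose_mat L) $$ (i, j) = (\<Sum>m<n. (L * D) $$ (i, m) * transpose_mat L $$ (m, j))"
    using index_mult_mat_sum[OF mult_carrier_mat[OF L D] _ i j, of "transpose_mat L"] L by simp
  also have "\<dots> = (\<Sum>m<n. L $$ (i, m) * D $$ (m, m) * L $$ (j, m))"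
    using LD L j by (intro sum.cong) auto
  finally show ?thesis .
qed

lemma quad_form_ldl:
  assumes L: "(L::real mat) \<in> carrier_mat n n" and D: "D \<in> carrier_mat n n" and dg: "diagonal_mat D"
  shows "quad_form n (L * D * transpose_mat L) x = (\<Sum>m<n. D $$ (m, m) * (\<Sum>i<n. x i * L $$ (i, m))\<^sup>2)"
proof -
  have "quad_form n (L * D * transpose_mat L) x
      = (\<Sum>i<n. \<Sum>j<n. \<Sum>m<n. D $$ (m, m) * ((x i * L $$ (i, m)) * (x j * L $$ (j, m))))"
    unfolding quad_form_def using ldl_entry[OF L D dg]
    by (intro sum.cong refl) (simp add: sum_distrib_left sum_distrib_right algebra_simps)
  also have "\<dots> = (\<Sum>m<n. \<Sum>i<n. \<Sum>j<n. D $$ (m, m) * ((x i * L $$ (i, m)) * (x j * L $$ (j, m))))"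
    by (subst sum.swap, rule sum.cong[OF refl], rule sum.swap)
  also have "\<dots> = (\<Sum>m<n. D $$ (m, m) * (\<Sum>i<n. x i * L $$ (i, m))\<^sup>2)"
    unfolding power2_eq_square sum_product by (simp add: sum_distrib_left)
  finally show ?thesis .
qed

text \<open>Solving \<open>y = L\<^sup>T x\<close> for \<open>x\<close> by back substitution: each \<open>x\<^sub>k\<close> picks up at most the factor
  \<open>1 + u\<close> from the later unknowns.\<close>

lemma back_substitution_bound:
  fixes L :: "real mat" and x :: "nat \<Rightarrow> real"
  assumes d1: "\<And>i. i < n \<Longrightarrow> L $$ (i, i) = 1" and up: "\<And>i j. i < j \<Longrightarrow> j < n \<Longrightarrow> L $$ (i, j) = 0"
    and lb: "\<And>i j. i < n \<Longrightarrow> j < n \<Longrightarrow> \<bar>L $$ (i, j)\<bar> \<le> u" and u: "0 \<le> u" and "k \<le> n"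
  shows "(\<Sum>i\<in>{k..<n}. \<bar>x i\<bar>) \<le> (1 + u) ^ (n - k) * (\<Sum>i\<in>{k..<n}. \<bar>\<Sum>j<n. x j * L $$ (j, i)\<bar>)"
  using \<open>k \<le> n\<close>
proof (induction "n - k" arbitrary: k)
  case 0
  then show ?case by simp
next
  case (Suc d)
  define y where "y = (\<lambda>i. \<Sum>j<n. x j * L $$ (j, i))"
  have kn: "k < n" using Suc by simp
  have IH: "(\<Sum>i\<in>{Suc k..<n}. \<bar>x i\<bar>) \<le> (1 + u) ^ (n - Suc k) * (\<Sum>i\<in>{Suc k..<n}. \<bar>y i\<bar>)"
    using Suc.hyps(1)[of "Suc k"] Suc.hyps(2) kn unfolding y_def by simp
  have yk: "y k = x k + (\<Sum>j\<in>{Suc k..<n}. x j * L $$ (j, k))"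
  proof -
    have split: "{..<n} = {..<k} \<union> insert k {Suc k..<n}" using kn by auto
    have "(\<Sum>j\<in>{..<k}. x j * L $$ (j, k)) = 0" using up kn by (intro sum.neutral) auto
    then show ?thesis unfolding y_def split using d1 kn by (subst sum.union_disjoint) auto
  qed
  have "\<bar>\<Sum>j\<in>{Suc k..<n}. x j * L $$ (j, k)\<bar> \<le> (\<Sum>j\<in>{Suc k..<n}. \<bar>x j\<bar> * u)"
    by (rule order_trans[OF sum_abs], rule sum_mono) (use lb kn in \<open>auto simp: abs_mult intro!: mult_left_mono\<close>)
  then have xk: "\<bar>x k\<bar> \<le> \<bar>y k\<bar> + u * (\<Sum>j\<in>{Suc k..<n}. \<bar>x j\<bar>)"
    using yk by (simp add: sum_distrib_left mult.commute)
  have ek: "{k..<n} = insert k {Suc k..<n}" using kn by auto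
  have pw: "(1 + u) ^ (n - k) = (1 + u) * (1 + u) ^ (n - Suc k)"
    using kn by (metis Suc_diff_Suc power_Suc)
  have p1: "1 \<le> (1 + u) ^ (n - k)" using u by simp
  have "(\<Sum>i\<in>{k..<n}. \<bar>x i\<bar>) \<le> \<bar>y k\<bar> + (1 + u) * (\<Sum>i\<in>{Suc k..<n}. \<bar>x i\<bar>)"
    unfolding ek using xk by (simp add: algebra_simps)
  also have "\<dots> \<le> \<bar>y k\<bar> + (1 + u) ^ (n - k) * (\<Sum>i\<in>{Suc k..<n}. \<bar>y i\<bar>)"
    using mult_left_mono[OF IH, of "1 + u"] u pw by simp
  also have "\<dots> \<le> (1 + u) ^ (n - k) * (\<Sum>i\<in>{k..<n}. \<bar>y i\<bar>)"
    unfolding ek using mult_right_mono[OF p1, of "\<bar>y k\<bar>"] by (simp add: algebra_simps)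
  finally show ?case unfolding y_def .
qed

lemma sum_sq_le_sq_sum:
  fixes a :: "nat \<Rightarrow> real"
  assumes "\<And>i. i \<in> A \<Longrightarrow> 0 \<le> a i"
  shows "(\<Sum>i\<in>A. (a i)\<^sup>2) \<le> (\<Sum>i\<in>A. a i)\<^sup>2"
proof (cases "finite A")
  case True
  then show ?thesis using assms
  proof (induction A rule: finite_induct)
    case (insert x F)
    then have "(\<Sum>i\<in>insert x F. (a i)\<^sup>2) \<le> (a x)\<^sup>2 + (\<Sum>i\<in>F. a i)\<^sup>2" by simp
    also have "\<dots> \<le> (a x + (\<Sum>i\<in>F. a i))\<^sup>2"
      using insert sum_nonneg[of F a] by (simp add: power2_sum)
    finally show ?case using insert by simp
  qed simp
qed simp

lemma sq_sum_le_card_sum_sq: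
  fixes a :: "nat \<Rightarrow> real"
  shows "(\<Sum>i\<in>A. a i)\<^sup>2 \<le> real (card A) * (\<Sum>i\<in>A. (a i)\<^sup>2)"
proof -
  have "(\<Sum>i\<in>A. a i)\<^sup>2 = (\<Sum>i\<in>A. \<Sum>j\<in>A. a i * a j)" by (simp add: power2_eq_square sum_product)
  also have "\<dots> \<le> (\<Sum>i\<in>A. \<Sum>j\<in>A. ((a i)\<^sup>2 + (a j)\<^sup>2) / 2)"
    using sum_squares_bound by (intro sum_mono) (simp add: field_simps)
  also have "\<dots> = (\<Sum>i\<in>A. \<Sum>j\<in>A. (a i)\<^sup>2 / 2) + (\<Sum>i\<in>A. \<Sum>j\<in>A. (a j)\<^sup>2 / 2)"
    by (simp add: sum.distrib add_divide_distrib)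
  also have "(\<Sum>i\<in>A. \<Sum>j\<in>A. (a j)\<^sup>2 / 2) = (\<Sum>i\<in>A. \<Sum>j\<in>A. (a i)\<^sup>2 / 2)" by (rule sum.swap)
  also have "(\<Sum>i\<in>A. \<Sum>j\<in>A. (a i)\<^sup>2 / 2) = real (card A) * (\<Sum>i\<in>A. (a i)\<^sup>2) / 2"
    by (simp add: sum_distrib_left[symmetric] sum_divide_distrib[symmetric])
  finally show ?thesis by simp
qed

text \<open>In \<open>x\<^sup>T Y x = \<Sum> d\<^sub>m y\<^sub>m\<^sup>2\<close> with \<open>y = L\<^sup>T x\<close> the \<open>d\<^sub>m\<close> are bounded below by the Siegel
  conditions, and \<open>x\<close> is controlled by \<open>y\<close> through back substitution.\<close>

lemma jacobi_siegel_uniform_rayleigh: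
  assumes u: "0 < u"
  shows "\<exists>c>0. \<forall>Y. jacobi_siegel n u Y \<longrightarrow> rayleigh_ge n Y c"
proof -
  define U where "U = max 1 u"
  define ka where "ka = (1 + U) ^ (2 * n) * (real n + 1)"
  have U: "0 \<le> U" "0 < U" unfolding U_def by auto
  have ka0: "0 < ka" unfolding ka_def using U by simp
  have "1 / U ^ n / ka * sq_norm n x \<le> quad_form n Y x" if J: "jacobi_siegel n u Y" for Y x
  proof -
    obtain L D where L: "L \<in> carrier_mat n n" and D: "D \<in> carrier_mat n n" and dg: "diagonal_mat D"
      and Ye: "Y = L * D * transpose_mat L" and d1: "\<And>i. i < n \<Longrightarrow> L $$ (i, i) = 1"
      and up: "\<And>i j. i < j \<Longrightarrow> j < n \<Longrightarrow> L $$ (i, j) = 0"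
      and lb: "\<And>i j. i < n \<Longrightarrow> j < n \<Longrightarrow> \<bar>L $$ (i, j)\<bar> \<le> U"
      and dm: "\<And>m. m < n \<Longrightarrow> 1 / U ^ n \<le> D $$ (m, m)"
      using jacobi_siegelE[OF u J] unfolding U_def by blast
    define y where "y = (\<lambda>m. \<Sum>i<n. x i * L $$ (i, m))"
    have "1 / U ^ n * sq_norm n y = (\<Sum>m<n. 1 / U ^ n * (y m)\<^sup>2)"
      unfolding sq_norm_def by (simp add: sum_distrib_left)
    also have "\<dots> \<le> (\<Sum>m<n. D $$ (m, m) * (y m)\<^sup>2)" using dm by (intro sum_mono mult_right_mono) auto
    also have "\<dots> = quad_form n Y x" unfolding Ye y_def by (rule quad_form_ldl[OF L D dg, symmetric])
    finally have qY: "1 / U ^ n * sq_norm n y \<le> quad_form n Y x" .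
    have bb: "(\<Sum>i\<in>{0..<n}. \<bar>x i\<bar>) \<le> (1 + U) ^ n * (\<Sum>i\<in>{0..<n}. \<bar>y i\<bar>)"
      using back_substitution_bound[OF d1 up lb U(1), where k=0 and x=x] unfolding y_def by simp
    have "sq_norm n x = (\<Sum>i\<in>{0..<n}. \<bar>x i\<bar>\<^sup>2)" unfolding sq_norm_def by (simp add: atLeast0LessThan)
    also have "\<dots> \<le> (\<Sum>i\<in>{0..<n}. \<bar>x i\<bar>)\<^sup>2" by (rule sum_sq_le_sq_sum) auto
    also have "\<dots> \<le> ((1 + U) ^ n * (\<Sum>i\<in>{0..<n}. \<bar>y i\<bar>))\<^sup>2"
      using bb by (intro power_mono) (auto intro: sum_nonneg)
    also have "\<dots> = (1 + U) ^ (2 * n) * (\<Sum>i\<in>{0..<n}. \<bar>y i\<bar>)\<^sup>2"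
      by (simp add: power_mult_distrib power_mult[symmetric] mult.commute)
    also have "\<dots> \<le> (1 + U) ^ (2 * n) * (real n * sq_norm n y)"
      using sq_sum_le_card_sum_sq[of "\<lambda>i. \<bar>y i\<bar>" "{0..<n}"] U
      unfolding sq_norm_def by (simp add: atLeast0LessThan mult_left_mono)
    also have "\<dots> \<le> ka * sq_norm n y" unfolding ka_def using U sq_norm_nonneg[of n y]
      by (simp add: mult_right_mono mult.assoc)
    finally have "1 / U ^ n / ka * sq_norm n x \<le> 1 / U ^ n * sq_norm n y"
      using ka0 U by (simp add: field_simps)
    with qY show ?thesis by linarith
  qed
  moreover have "0 < 1 / U ^ n / ka" unfolding U_def using ka0 by simp
  ultimately show ?thesis unfolding rayleigh_ge_def by blast
qed

lemma ldl_diag_ge: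
  assumes L: "(L::real mat) \<in> carrier_mat n n" and D: "D \<in> carrier_mat n n" and dg: "diagonal_mat D"
    and D0: "\<And>p. p < n \<Longrightarrow> 0 \<le> D $$ (p, p)" and m: "m < n" and Lmm: "L $$ (m, m) = 1"
  shows "D $$ (m, m) \<le> (L * D * transpose_mat L) $$ (m, m)"
proof -
  have "D $$ (m, m) * (L $$ (m, m))\<^sup>2 \<le> (\<Sum>p<n. D $$ (p, p) * (L $$ (m, p))\<^sup>2)"
    using D0 m by (intro member_le_sum) auto
  also have "\<dots> = (L * D * transpose_mat L) $$ (m, m)"
    unfolding ldl_entry[OF L D dg m m] by (simp add: power2_eq_square mult_ac)
  finally show ?thesis using Lmm by simp
qed

text \<open>The first \<open>k\<close> rows of \<open>Y = LDL\<^sup>T\<close> only involve \<open>d\<^sub>1, \<dots>, d\<^sub>k\<close>.\<close>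

lemma jacobi_siegel_entry_bound:
  assumes u: "0 < u" and J: "jacobi_siegel n u Y" and k: "k \<le> n" and i: "i < k" and j: "j < n"
  shows "\<bar>Y $$ (i, j)\<bar> \<le> real n * (max 1 u)\<^sup>2 * (\<Sum>m<k. \<bar>Y $$ (m, m)\<bar>)"
proof -
  define U where "U = max 1 u"
  define S where "S = (\<Sum>m<k. \<bar>Y $$ (m, m)\<bar>)"
  obtain L D where L: "L \<in> carrier_mat n n" and D: "D \<in> carrier_mat n n" and dg: "diagonal_mat D"
    and Ye: "Y = L * D * transpose_mat L" and d1: "\<And>i. i < n \<Longrightarrow> L $$ (i, i) = 1"
    and up: "\<And>i j. i < j \<Longrightarrow> j < n \<Longrightarrow> L $$ (i, j) = 0"
    and lb: "\<And>i j. i < n \<Longrightarrow> j < n \<Longrightarrow> \<bar>L $$ (i, j)\<bar> \<le> U"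
    and dm: "\<And>m. m < n \<Longrightarrow> 1 / U ^ n \<le> D $$ (m, m)"
    using jacobi_siegelE[OF u J] unfolding U_def by blast
  have D0: "0 \<le> D $$ (m, m)" if "m < n" for m
  proof -
    have "0 < 1 / U ^ n" unfolding U_def by simp
    then show ?thesis using dm[OF that] by linarith
  qed
  have S0: "0 \<le> S" unfolding S_def by (auto intro: sum_nonneg)
  have U: "0 \<le> U" unfolding U_def by simp
  have DS: "D $$ (m, m) \<le> S" if m: "m < k" for m
  proof -
    have "D $$ (m, m) \<le> Y $$ (m, m)" unfolding Ye using m k D0 d1[of m] by (intro ldl_diag_ge[OF L D dg]) auto
    also have "\<dots> \<le> \<bar>Y $$ (m, m)\<bar>" by (rule abs_ge_self)
    also have "\<dots> \<le> S" unfolding S_def using m by (intro member_le_sum) auto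
    finally show ?thesis .
  qed
  have ig: "i < n" using i k by simp
  have "\<bar>Y $$ (i, j)\<bar> \<le> (\<Sum>m<n. \<bar>L $$ (i, m) * D $$ (m, m) * L $$ (j, m)\<bar>)"
    unfolding Ye ldl_entry[OF L D dg ig j] by (rule sum_abs)
  also have "\<dots> = (\<Sum>m<n. \<bar>L $$ (i, m)\<bar> * D $$ (m, m) * \<bar>L $$ (j, m)\<bar>)"
    using D0 by (intro sum.cong) (auto simp: abs_mult)
  also have "\<dots> \<le> (\<Sum>m<n. U * S * U)"
  proof (rule sum_mono)
    fix m assume m: "m \<in> {..<n}"
    show "\<bar>L $$ (i, m)\<bar> * D $$ (m, m) * \<bar>L $$ (j, m)\<bar> \<le> U * S * U"
    proof (cases "m \<le> i")
      case True
      then show ?thesis using lb[of i m] lb[of j m] DS[of m] D0[of m] ig i j m S0 U by (intro mult_mono) auto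
    next
      case False
      then show ?thesis using up[of i m] m S0 U by simp
    qed
  qed
  also have "\<dots> = real n * U\<^sup>2 * S" by (simp add: power2_eq_square mult_ac)
  finally show ?thesis unfolding U_def S_def .
qed

lemma mtrace_add:
  assumes "A \<in> carrier_mat n n" "B \<in> carrier_mat n n"
  shows "mtrace (A + B) = mtrace A + mtrace B"
  unfolding mtrace_def using assms by (simp add: sum.distrib)

lemma mtrace_mult_comm:
  assumes A: "(A::real mat) \<in> carrier_mat m n" and B: "B \<in> carrier_mat n m"
  shows "mtrace (A * B) = mtrace (B * A)"
proof -
  have "mtrace (A * B) = (\<Sum>i<m. \<Sum>j<n. A $$ (i, j) * B $$ (j, i))"
    unfolding mtrace_def using A B index_mult_mat_sum[OF A B] by simp
  also have "\<dots> = (\<Sum>j<n. \<Sum>i<m. B $$ (j, i) * A $$ (i, j))"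
    by (subst sum.swap) (simp add: mult.commute)
  also have "\<dots> = mtrace (B * A)"
    unfolding mtrace_def using A B index_mult_mat_sum[OF B A] by simp
  finally show ?thesis .
qed

lemma sum_lessThan_add:
  fixes a b :: nat
  shows "(\<Sum>i<a + b. f i) = (\<Sum>i<a. f i) + (\<Sum>i<b. f (a + i))"
  by (induction b) (auto simp: add.assoc)

lemma mtrace_four_block_mat:
  assumes "A \<in> carrier_mat n1 n1" "D \<in> carrier_mat n2 n2"
  shows "mtrace (four_block_mat A B C D) = mtrace A + mtrace D"
  unfolding mtrace_def using assms by (simp add: sum_lessThan_add)

lemma frob2_nonneg: "0 \<le> frob2 A"
  unfolding frob2_def by (intro sum_nonneg) simp

lemma frob2_transpose: "frob2 (transpose_mat A) = frob2 A"
  unfolding frob2_def by (simp, subst sum.swap, simp)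

lemma two_mtrace_mult_transpose_le:
  assumes A: "(A::real mat) \<in> carrier_mat m n" and B: "B \<in> carrier_mat m n" and s: "0 < s"
  shows "2 * mtrace (A * transpose_mat B) \<le> s * frob2 A + frob2 B / s"
proof -
  have "2 * mtrace (A * transpose_mat B) = (\<Sum>i<m. \<Sum>j<n. 2 * (A $$ (i, j) * B $$ (i, j)))"
    unfolding mtrace_def using A B index_mult_mat_sum[OF A transpose_carrier_mat[THEN iffD2, OF B]]
    by (simp add: sum_distrib_left)
  also have "\<dots> \<le> (\<Sum>i<m. \<Sum>j<n. s * (A $$ (i, j))\<^sup>2 + (B $$ (i, j))\<^sup>2 / s)"
  proof (intro sum_mono)
    fix i j
    have "0 \<le> (s * A $$ (i, j) - B $$ (i, j))\<^sup>2 / s" using s by simp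
    also have "\<dots> = s * (A $$ (i, j))\<^sup>2 + (B $$ (i, j))\<^sup>2 / s - 2 * (A $$ (i, j) * B $$ (i, j))"
      using s by (simp add: power2_diff field_simps power2_eq_square)
    finally show "2 * (A $$ (i, j) * B $$ (i, j)) \<le> s * (A $$ (i, j))\<^sup>2 + (B $$ (i, j))\<^sup>2 / s" by simp
  qed
  also have "\<dots> = s * frob2 A + frob2 B / s"
    unfolding frob2_def using A B by (simp add: sum.distrib sum_distrib_left sum_divide_distrib)
  finally show ?thesis .
qed

lemma mtrace_diagonal_congruence:
  assumes H: "(H::real mat) \<in> carrier_mat m n" and D: "D \<in> carrier_mat n n" and dg: "diagonal_mat D"
    and Q: "sym_mat m Q"
  shows "mtrace (H * D * transpose_mat H * Q) = (\<Sum>p<n. D $$ (p, p) * quad_form m Q (\<lambda>i. H $$ (i, p)))"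
proof -
  have HDH: "H * D * transpose_mat H \<in> carrier_mat m m" using H D by simp
  have Qc: "Q \<in> carrier_mat m m" using Q unfolding sym_mat_def by simp
  have "mtrace (H * D * transpose_mat H * Q) = (\<Sum>i<m. \<Sum>j<m. (H * D * transpose_mat H) $$ (i, j) * Q $$ (j, i))"
    unfolding mtrace_def using HDH Qc by (auto intro!: sum.cong simp: index_mult_mat_sum[OF HDH Qc])
  also have "\<dots> = (\<Sum>i<m. \<Sum>j<m. \<Sum>p<n. D $$ (p, p) * (H $$ (i, p) * Q $$ (i, j) * H $$ (j, p)))"
    using ldl_entry[OF H D dg] sym_mat_entry[OF Q]
    by (intro sum.cong refl) (simp add: sum_distrib_left sum_distrib_right mult_ac)
  also have "\<dots> = (\<Sum>p<n. \<Sum>i<m. \<Sum>j<m. D $$ (p, p) * (H $$ (i, p) * Q $$ (i, j) * H $$ (j, p)))"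
    by (subst sum.swap, rule sum.cong[OF refl], rule sum.swap)
  also have "\<dots> = (\<Sum>p<n. D $$ (p, p) * quad_form m Q (\<lambda>i. H $$ (i, p)))"
    unfolding quad_form_def by (simp add: sum_distrib_left)
  finally show ?thesis .
qed

text \<open>With \<open>T = LDL\<^sup>T\<close> and \<open>H = GL\<close>, the trace is \<open>\<Sum>\<^sub>p d\<^sub>p h\<^sub>p\<^sup>TQh\<^sub>p \<ge> a \<Sum>\<^sub>p d\<^sub>p \<parallel>h\<^sub>p\<parallel>\<^sup>2 =
  a \<Sum>\<^sub>i g\<^sub>i T g\<^sub>i\<^sup>T\<close> over the columns \<open>h\<^sub>p\<close> of \<open>H\<close> and the rows \<open>g\<^sub>i\<close> of \<open>G\<close>.\<close>

lemma mtrace_congruence_ge: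
  fixes G Q T :: "real mat"
  assumes G: "G \<in> carrier_mat m n" and Q: "sym_mat m Q" and Qa: "rayleigh_ge m Q a" and a: "0 \<le> a"
    and T: "nonneg_ldl n T" and Tb: "rayleigh_ge n T b"
  shows "a * b * frob2 G \<le> mtrace (G * T * (transpose_mat G * Q))"
proof -
  obtain L D where L: "L \<in> carrier_mat n n" and D: "D \<in> carrier_mat n n" and dg: "diagonal_mat D"
    and D0: "\<And>k. k < n \<Longrightarrow> 0 \<le> D $$ (k, k)" and Te: "T = L * D * transpose_mat L"
    using T unfolding nonneg_ldl_def by blast
  define H where "H = G * L"
  have H: "H \<in> carrier_mat m n" unfolding H_def using G L by simp
  have Lt: "transpose_mat L \<in> carrier_mat n n" and Gt: "transpose_mat G \<in> carrier_mat n m" using L G by auto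
  have "G * T = G * L * D * transpose_mat L"
    unfolding Te using assoc_mult_mat[OF G mult_carrier_mat[OF L D] Lt] assoc_mult_mat[OF G L D] by simp
  also have "\<dots> * transpose_mat G = H * D * transpose_mat H"
    unfolding H_def transpose_mult[OF G L]
    using assoc_mult_mat[OF mult_carrier_mat[OF mult_carrier_mat[OF G L] D] Lt Gt] by simp
  finally have GTG: "G * T * transpose_mat G = H * D * transpose_mat H" .
  have Tc: "T \<in> carrier_mat n n" unfolding Te using L D by simp
  have Qc: "Q \<in> carrier_mat m m" using Q unfolding sym_mat_def by simp
  have "G * T * (transpose_mat G * Q) = H * D * transpose_mat H * Q"
    unfolding assoc_mult_mat[OF mult_carrier_mat[OF G Tc] Gt Qc, symmetric] GTG ..
  then have tr: "mtrace (G * T * (transpose_mat G * Q)) = (\<Sum>p<n. D $$ (p, p) * quad_form m Q (\<lambda>i. H $$ (i, p)))"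
    using mtrace_diagonal_congruence[OF H D dg Q] by simp
  have rows: "(\<Sum>p<n. D $$ (p, p) * (H $$ (i, p))\<^sup>2) = quad_form n T (\<lambda>k. G $$ (i, k))" if "i < m" for i
    unfolding Te quad_form_ldl[OF L D dg] H_def using that index_mult_mat_sum[OF G L] by (intro sum.cong refl) auto
  have "a * b * frob2 G = a * (\<Sum>i<m. b * sq_norm n (\<lambda>k. G $$ (i, k)))"
    unfolding frob2_def sq_norm_def using G by (simp add: sum_distrib_left mult.assoc)
  also have "\<dots> \<le> a * (\<Sum>i<m. quad_form n T (\<lambda>k. G $$ (i, k)))"
    using Tb a unfolding rayleigh_ge_def by (intro mult_left_mono sum_mono) auto
  also have "\<dots> = a * (\<Sum>i<m. \<Sum>p<n. D $$ (p, p) * (H $$ (i, p))\<^sup>2)" using rows by simp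
  also have "\<dots> = (\<Sum>p<n. D $$ (p, p) * (a * sq_norm m (\<lambda>i. H $$ (i, p))))"
    unfolding sq_norm_def by (subst sum.swap) (simp add: sum_distrib_left mult_ac)
  also have "\<dots> \<le> (\<Sum>p<n. D $$ (p, p) * quad_form m Q (\<lambda>i. H $$ (i, p)))"
    using Qa D0 unfolding rayleigh_ge_def by (intro sum_mono mult_left_mono) auto
  finally show ?thesis unfolding tr .
qed

lemma cauchy_schwarz_sum:
  fixes a b :: "nat \<Rightarrow> real"
  shows "(\<Sum>l\<in>S. a l * b l)\<^sup>2 \<le> (\<Sum>l\<in>S. (a l)\<^sup>2) * (\<Sum>l\<in>S. (b l)\<^sup>2)"
proof (rule quadratic_nonneg_discriminant)
  fix r :: real
  have "0 \<le> (\<Sum>l\<in>S. (a l + r * b l)\<^sup>2)" by (auto intro: sum_nonneg)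
  also have "\<dots> = (\<Sum>l\<in>S. (a l)\<^sup>2) + 2 * r * (\<Sum>l\<in>S. a l * b l) + r\<^sup>2 * (\<Sum>l\<in>S. (b l)\<^sup>2)"
    by (simp add: power2_sum sum.distrib sum_distrib_left algebra_simps power_mult_distrib)
  finally show "0 \<le> (\<Sum>l\<in>S. (a l)\<^sup>2) + 2 * r * (\<Sum>l\<in>S. a l * b l) + r\<^sup>2 * (\<Sum>l\<in>S. (b l)\<^sup>2)" .
qed (auto intro: sum_nonneg)

lemma frob2_mult_le:
  assumes A: "(A::real mat) \<in> carrier_mat m k" and B: "B \<in> carrier_mat k n"
  shows "frob2 (A * B) \<le> frob2 A * frob2 B"
proof -
  have "frob2 (A * B) = (\<Sum>i<m. \<Sum>j<n. (\<Sum>l<k. A $$ (i, l) * B $$ (l, j))\<^sup>2)"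
    unfolding frob2_def using A B index_mult_mat_sum[OF A B] by simp
  also have "\<dots> \<le> (\<Sum>i<m. \<Sum>j<n. (\<Sum>l<k. (A $$ (i, l))\<^sup>2) * (\<Sum>l<k. (B $$ (l, j))\<^sup>2))"
    by (intro sum_mono cauchy_schwarz_sum)
  also have "\<dots> = (\<Sum>i<m. \<Sum>l<k. (A $$ (i, l))\<^sup>2) * (\<Sum>j<n. \<Sum>l<k. (B $$ (l, j))\<^sup>2)"
    by (simp add: sum_product)
  also have "(\<Sum>j<n. \<Sum>l<k. (B $$ (l, j))\<^sup>2) = (\<Sum>l<k. \<Sum>j<n. (B $$ (l, j))\<^sup>2)" by (rule sum.swap)
  finally show ?thesis unfolding frob2_def using A B by simp
qed

lemma frob2_le_entry_bound:
  assumes A: "(A::real mat) \<in> carrier_mat m n" and b: "\<And>i j. i < m \<Longrightarrow> j < n \<Longrightarrow> \<bar>A $$ (i, j)\<bar> \<le> B"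
  shows "frob2 A \<le> real m * real n * B\<^sup>2"
proof -
  have "frob2 A = (\<Sum>i<m. \<Sum>j<n. \<bar>A $$ (i, j)\<bar>\<^sup>2)" unfolding frob2_def using A by simp
  also have "\<dots> \<le> (\<Sum>i<m. \<Sum>j<n. B\<^sup>2)" using b by (intro sum_mono power_mono) auto
  finally show ?thesis by simp
qed

lemma frob2_diff_add_le:
  assumes V: "(V::real mat) \<in> carrier_mat n n" and P: "P \<in> carrier_mat n n" and Q: "Q \<in> carrier_mat n n"
  shows "frob2 (V - (P + Q)) \<le> 3 * frob2 V + 3 * frob2 P + 3 * frob2 Q"
proof -
  have sq3: "(x - y - z)\<^sup>2 \<le> 3 * (x\<^sup>2 + y\<^sup>2 + z\<^sup>2)" for x y z :: real
  proof -
    have "0 \<le> (x + y)\<^sup>2 + (x + z)\<^sup>2 + (y - z)\<^sup>2" by simp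
    then show ?thesis by (simp add: power2_eq_square algebra_simps)
  qed
  have "frob2 (V - (P + Q)) = (\<Sum>i<n. \<Sum>j<n. (V $$ (i, j) - P $$ (i, j) - Q $$ (i, j))\<^sup>2)"
    unfolding frob2_def using V P Q by (auto intro!: sum.cong simp: algebra_simps)
  also have "\<dots> \<le> (\<Sum>i<n. \<Sum>j<n. 3 * ((V $$ (i, j))\<^sup>2 + (P $$ (i, j))\<^sup>2 + (Q $$ (i, j))\<^sup>2))"
    by (intro sum_mono sq3)
  also have "\<dots> = 3 * frob2 V + 3 * frob2 P + 3 * frob2 Q"
    unfolding frob2_def using V P Q by (simp add: sum.distrib sum_distrib_left)
  finally show ?thesis .
qed

lemma blk_carrier:
  assumes "A \<in> carrier_mat (n1 + n2) (n1 + n2)"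
  shows "blk1 n1 A \<in> carrier_mat n1 n1" "blk3 n1 A \<in> carrier_mat n1 n2" "blk2 n1 A \<in> carrier_mat n2 n2"
  using assms unfolding blk1_def blk2_def blk3_def by auto

lemma four_block_blk:
  assumes S: "sym_mat (n1 + n2) A"
  shows "A = four_block_mat (blk1 n1 A) (blk3 n1 A) (transpose_mat (blk3 n1 A)) (blk2 n1 A)"
  using S sym_mat_entry[OF S] unfolding sym_mat_def blk1_def blk2_def blk3_def by (auto intro!: eq_matI)

lemma sym_mat_blk:
  assumes S: "sym_mat (n1 + n2) A"
  shows "sym_mat n1 (blk1 n1 A)" "sym_mat n2 (blk2 n1 A)"
  using S sym_mat_entry[OF S] unfolding sym_mat_def blk1_def blk2_def by (auto intro!: eq_matI)

lemma mtrace_four_block_mult: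
  assumes "A1 \<in> carrier_mat n1 n1" "B1 \<in> carrier_mat n1 n2" "C1 \<in> carrier_mat n2 n1" "D1 \<in> carrier_mat n2 n2"
    "A2 \<in> carrier_mat n1 n1" "B2 \<in> carrier_mat n1 n2" "C2 \<in> carrier_mat n2 n1" "D2 \<in> carrier_mat n2 n2"
  shows "mtrace (four_block_mat A1 B1 C1 D1 * four_block_mat A2 B2 C2 D2)
    = mtrace (A1 * A2) + mtrace (B1 * C2) + mtrace (C1 * B2) + mtrace (D1 * D2)"
  using assms by (simp add: mult_four_block_mat[OF assms] mtrace_four_block_mat[of _ n1 _ n2] mtrace_add[of _ n1]
    mtrace_add[of _ n2])

definition shear_mat :: "nat \<Rightarrow> nat \<Rightarrow> real mat \<Rightarrow> real mat" where
  "shear_mat n1 n2 A = four_block_mat (1\<^sub>m n1) A (0\<^sub>m n2 n1) (1\<^sub>m n2)"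

lemma shear_mat_carrier: "A \<in> carrier_mat n1 n2 \<Longrightarrow> shear_mat n1 n2 A \<in> carrier_mat (n1 + n2) (n1 + n2)"
  unfolding shear_mat_def by simp

lemma transpose_shear_mat:
  "A \<in> carrier_mat n1 n2 \<Longrightarrow>
    transpose_mat (shear_mat n1 n2 A) = four_block_mat (1\<^sub>m n1) (0\<^sub>m n1 n2) (transpose_mat A) (1\<^sub>m n2)"
  unfolding shear_mat_def by (subst transpose_four_block_mat) auto

lemma shear_congruence:
  assumes A: "A \<in> carrier_mat n1 n2" and M1: "M1 \<in> carrier_mat n1 n1" and M3: "M3 \<in> carrier_mat n1 n2"
    and M2: "M2 \<in> carrier_mat n2 n2"
  shows "transpose_mat (shear_mat n1 n2 A) * four_block_mat M1 M3 (transpose_mat M3) M2 * shear_mat n1 n2 A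
    = four_block_mat M1 (M1 * A + M3) (transpose_mat A * M1 + transpose_mat M3)
        (transpose_mat A * M1 * A + transpose_mat M3 * A + (transpose_mat A * M3 + M2))"
proof -
  have "transpose_mat (shear_mat n1 n2 A) * four_block_mat M1 M3 (transpose_mat M3) M2
      = four_block_mat M1 M3 (transpose_mat A * M1 + transpose_mat M3) (transpose_mat A * M3 + M2)"
    unfolding transpose_shear_mat[OF A] using A M1 M2 M3
    by (subst mult_four_block_mat[of _ n1 n1 _ n2 _ n2 _ _ n1 _ n2]) auto
  also have "\<dots> * shear_mat n1 n2 A = four_block_mat M1 (M1 * A + M3) (transpose_mat A * M1 + transpose_mat M3)
        ((transpose_mat A * M1 + transpose_mat M3) * A + (transpose_mat A * M3 + M2))"
    unfolding shear_mat_def using A M1 M2 M3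
    by (subst mult_four_block_mat[of _ n1 n1 _ n2 _ n2 _ _ n1 _ n2]) auto
  also have "(transpose_mat A * M1 + transpose_mat M3) * A = transpose_mat A * M1 * A + transpose_mat M3 * A"
    using A M1 M3 by (simp add: add_mult_distrib_mat[of _ n2 n1])
  finally show ?thesis .
qed

lemma shear_block_diag:
  fixes Y1 P Y3 Y2 :: "real mat"
  assumes Y1: "Y1 \<in> carrier_mat n1 n1" and P: "P \<in> carrier_mat n1 n1" and Y1P: "Y1 * P = 1\<^sub>m n1"
    and Ps: "transpose_mat P = P" and Y3: "Y3 \<in> carrier_mat n1 n2" and Y2: "Y2 \<in> carrier_mat n2 n2"
  shows "four_block_mat Y1 Y3 (transpose_mat Y3) Y2 = transpose_mat (shear_mat n1 n2 (P * Y3))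
    * four_block_mat Y1 (0\<^sub>m n1 n2) (0\<^sub>m n2 n1) (Y2 - transpose_mat Y3 * P * Y3) * shear_mat n1 n2 (P * Y3)"
proof -
  define A where "A = P * Y3"
  define t where "t = Y2 - transpose_mat Y3 * P * Y3"
  have A: "A \<in> carrier_mat n1 n2" unfolding A_def using P Y3 by simp
  have Y3PY3: "transpose_mat Y3 * P * Y3 \<in> carrier_mat n2 n2" using Y3 P by simp
  have t: "t \<in> carrier_mat n2 n2" unfolding t_def using Y3PY3 by (rule minus_carrier_mat)
  have PY1: "P * Y1 = 1\<^sub>m n1" using mat_mult_left_right_inverse[OF Y1 P Y1P] .
  have At: "transpose_mat A = transpose_mat Y3 * P" unfolding A_def using transpose_mult[OF P Y3] Ps by simp
  have e1: "Y1 * A = Y3" unfolding A_def using assoc_mult_mat[OF Y1 P Y3, symmetric] Y1P Y3 by simp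
  have e2: "transpose_mat A * Y1 = transpose_mat Y3"
    unfolding At using assoc_mult_mat[OF transpose_carrier_mat[THEN iffD2, OF Y3] P Y1] PY1 Y3 by simp
  have "transpose_mat Y3 * A = transpose_mat Y3 * P * Y3"
    unfolding A_def using assoc_mult_mat[OF transpose_carrier_mat[THEN iffD2, OF Y3] P Y3] by simp
  then have e3: "transpose_mat Y3 * A + t = Y2" unfolding t_def using Y2 Y3PY3 by (auto intro!: eq_matI)
  have "transpose_mat (shear_mat n1 n2 A) * four_block_mat Y1 (0\<^sub>m n1 n2) (0\<^sub>m n2 n1) t * shear_mat n1 n2 A
      = four_block_mat Y1 Y3 (transpose_mat Y3) Y2"
    using shear_congruence[OF A Y1 zero_carrier_mat t] A Y1 Y3 t by (simp add: e1 e2 e3)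
  then show ?thesis unfolding A_def[symmetric] t_def[symmetric] by simp
qed


lemma shear_schur_factorization:
  assumes Y: "sym_mat (n1 + n2) Y" and Y1: "pos_def_mat n1 (blk1 n1 Y)"
  shows "Y = transpose_mat (shear_mat n1 n2 (minv (blk1 n1 Y) * blk3 n1 Y))
    * four_block_mat (blk1 n1 Y) (0\<^sub>m n1 n2) (0\<^sub>m n2 n1) (schur n1 Y) * shear_mat n1 n2 (minv (blk1 n1 Y) * blk3 n1 Y)"
proof -
  have S1: "sym_mat n1 (blk1 n1 Y)" using Y1 unfolding pos_def_mat_def by simp
  note d = pos_def_det_nonzero[OF Y1]
  have P: "minv (blk1 n1 Y) \<in> carrier_mat n1 n1" "transpose_mat (minv (blk1 n1 Y)) = minv (blk1 n1 Y)"
    using sym_mat_minv[OF S1 d] unfolding sym_mat_def by auto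
  have Yc: "Y \<in> carrier_mat (n1 + n2) (n1 + n2)" using Y unfolding sym_mat_def by simp
  show ?thesis
    unfolding schur_def using four_block_blk[OF Y] blk_carrier[OF Yc]
      shear_block_diag[OF blk_carrier(1)[OF Yc] P(1) minv_inverse(2)[OF blk_carrier(1)[OF Yc] d] P(2)]
    by metis
qed

lemma shear_zero_corner:
  fixes V3 A C :: "real mat"
  assumes A: "A \<in> carrier_mat n1 n2" and V3: "V3 \<in> carrier_mat n1 n2" and C: "C \<in> carrier_mat n2 n2"
  shows "four_block_mat (0\<^sub>m n1 n1) V3 (transpose_mat V3) (transpose_mat V3 * A + transpose_mat A * V3 + C)
    = transpose_mat (shear_mat n1 n2 A) * four_block_mat (0\<^sub>m n1 n1) V3 (transpose_mat V3) C * shear_mat n1 n2 A"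
  using shear_congruence[OF A zero_carrier_mat V3 C] A V3 C
  by (simp add: assoc_add_mat[of "transpose_mat V3 * A" n2 n2])

section \<open>A variational bound for the Weil--Petersson norm\<close>

text \<open>Each cross term \<open>2 tr(K\<^sub>3V\<^sub>3\<^sup>T)\<close>, \<open>2 tr(K\<^sub>2C)\<close> is absorbed, by AM--GM, into a quadratic term
  \<open>tr(K\<^sub>3tK\<^sub>3\<^sup>TY') \<ge> a\<lambda>\<parallel>K\<^sub>3\<parallel>\<^sup>2\<close> resp. \<open>tr(K\<^sub>2tK\<^sub>2t) \<ge> \<lambda>\<^sup>2\<parallel>K\<^sub>2\<parallel>\<^sup>2\<close>.\<close>

lemma mtrace_block_variational_le:
  fixes K1 K3 K2 Y1 t V3 C :: "real mat"
  assumes K1: "sym_mat n1 K1" and K3: "K3 \<in> carrier_mat n1 n2" and K2: "sym_mat n2 K2"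
    and Y1: "sym_mat n1 Y1" "nonneg_ldl n1 Y1" "rayleigh_ge n1 Y1 a" and a: "0 < a"
    and t: "sym_mat n2 t" "nonneg_ldl n2 t" "rayleigh_ge n2 t lam" and lam: "0 < lam"
    and V3: "V3 \<in> carrier_mat n1 n2" and C: "C \<in> carrier_mat n2 n2"
  defines "K \<equiv> four_block_mat K1 K3 (transpose_mat K3) K2"
    and "W \<equiv> four_block_mat (0\<^sub>m n1 n1) V3 (transpose_mat V3) C"
    and "D \<equiv> four_block_mat Y1 (0\<^sub>m n1 n2) (0\<^sub>m n2 n1) t"
  shows "2 * mtrace (K * W) - mtrace (K * D * (K * D)) \<le> 2 * frob2 V3 / (a * lam) + frob2 C / lam\<^sup>2"
proof -
  have K1c: "K1 \<in> carrier_mat n1 n1" and K1t: "transpose_mat K1 = K1" using K1 unfolding sym_mat_def by auto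
  have K2c: "K2 \<in> carrier_mat n2 n2" and K2t: "transpose_mat K2 = K2" using K2 unfolding sym_mat_def by auto
  have Y1c: "Y1 \<in> carrier_mat n1 n1" using Y1(1) unfolding sym_mat_def by auto
  have tc: "t \<in> carrier_mat n2 n2" using t(1) unfolding sym_mat_def by auto
  have K3t: "transpose_mat K3 \<in> carrier_mat n2 n1" and V3t: "transpose_mat V3 \<in> carrier_mat n2 n1"
    using K3 V3 by auto
  have trKW: "mtrace (K * W)
      = mtrace (K3 * transpose_mat V3) + mtrace (transpose_mat K3 * V3) + mtrace (K2 * C)"
    unfolding K_def W_def using mtrace_four_block_mult[OF K1c K3 K3t K2c zero_carrier_mat V3 V3t C] K1c
    by (simp add: right_mult_zero_mat mtrace_def)
  have KD: "K * D = four_block_mat (K1 * Y1) (K3 * t) (transpose_mat K3 * Y1) (K2 * t)"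
    unfolding K_def D_def using K1c K3 K2c Y1c tc
    by (subst mult_four_block_mat[of _ n1 n1 _ n2 _ n2 _ _ n1 _ n2]) auto
  have trKDKD: "mtrace (K * D * (K * D))
      = mtrace (K1 * Y1 * (transpose_mat K1 * Y1)) + mtrace (K3 * t * (transpose_mat K3 * Y1))
        + mtrace (transpose_mat K3 * Y1 * (transpose_mat (transpose_mat K3) * t))
        + mtrace (K2 * t * (transpose_mat K2 * t))"
    unfolding KD K1t K2t transpose_transpose using K1c K3 K2c Y1c tc
    by (intro mtrace_four_block_mult) auto
  have T1: "0 \<le> mtrace (K1 * Y1 * (transpose_mat K1 * Y1))"
    using mtrace_congruence_ge[OF K1c Y1(1) Y1(3) less_imp_le[OF a] Y1(2) rayleigh_ge_mono[OF Y1(3)], of 0]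
      a frob2_nonneg[of K1] by simp
  have T2: "a * lam * frob2 K3 \<le> mtrace (K3 * t * (transpose_mat K3 * Y1))"
    by (rule mtrace_congruence_ge[OF K3 Y1(1) Y1(3) less_imp_le[OF a] t(2,3)])
  have T3: "a * lam * frob2 K3 \<le> mtrace (transpose_mat K3 * Y1 * (transpose_mat (transpose_mat K3) * t))"
    using mtrace_congruence_ge[OF K3t t(1) t(3) less_imp_le[OF lam] Y1(2,3)]
    unfolding frob2_transpose by (simp only: mult.commute[of lam a])
  have T4: "lam * lam * frob2 K2 \<le> mtrace (K2 * t * (transpose_mat K2 * t))"
    by (rule mtrace_congruence_ge[OF K2c t(1) t(3) less_imp_le[OF lam] t(2,3)])
  have al: "0 < a * lam" and ll: "0 < lam * lam" using a lam by auto
  have B1: "2 * mtrace (K3 * transpose_mat V3) \<le> a * lam * frob2 K3 + frob2 V3 / (a * lam)"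
    by (rule two_mtrace_mult_transpose_le[OF K3 V3 al])
  have B2: "2 * mtrace (transpose_mat K3 * V3) \<le> a * lam * frob2 K3 + frob2 V3 / (a * lam)"
    using two_mtrace_mult_transpose_le[OF K3t V3t al] unfolding transpose_transpose frob2_transpose .
  have B3: "2 * mtrace (K2 * C) \<le> lam * lam * frob2 K2 + frob2 C / (lam * lam)"
    using two_mtrace_mult_transpose_le[OF K2c _ ll, of "transpose_mat C"] C
    unfolding transpose_transpose frob2_transpose by simp
  have "frob2 C / (lam * lam) = frob2 C / lam\<^sup>2" by (simp add: power2_eq_square)
  moreover have "2 * frob2 V3 / (a * lam) = frob2 V3 / (a * lam) + frob2 V3 / (a * lam)" by simp
  ultimately show ?thesis unfolding trKW trKDKD distrib_left using T1 T2 T3 T4 B1 B2 B3 by linarith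
qed

lemma mtrace_inverse_congruence:
  fixes E D W Y Z V :: "real mat"
  assumes E: "E \<in> carrier_mat N N" and D: "D \<in> carrier_mat N N" and W: "W \<in> carrier_mat N N"
    and Z: "sym_mat N Z" and V: "sym_mat N V" and ZY: "Z * Y = 1\<^sub>m N"
    and Ye: "Y = transpose_mat E * D * E" and Ve: "V = transpose_mat E * W * E"
  defines "K \<equiv> E * (Z * V * Z) * transpose_mat E"
  shows "sym_mat N K" "mtrace (Z * V * Z * V) = mtrace (K * W)"
    "mtrace (Z * V * Z * V) = mtrace (K * D * (K * D))"
proof -
  define M where "M = Z * V * Z"
  have Zc: "Z \<in> carrier_mat N N" and Zt: "transpose_mat Z = Z" and Vc: "V \<in> carrier_mat N N"
    and Vt: "transpose_mat V = V" using Z V unfolding sym_mat_def by auto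
  have Et: "transpose_mat E \<in> carrier_mat N N" using E by simp
  have M: "M \<in> carrier_mat N N" unfolding M_def using Zc Vc by simp
  have K: "K \<in> carrier_mat N N" unfolding K_def M_def[symmetric] using E M by simp
  have Yc: "Y \<in> carrier_mat N N" unfolding Ye using E D by simp
  have assocN: "X1 * X2 * X3 = X1 * (X2 * X3)"
    if "X1 \<in> carrier_mat N N" "X2 \<in> carrier_mat N N" "X3 \<in> carrier_mat N N" for X1 X2 X3 :: "real mat"
    using assoc_mult_mat[OF that] .
  have multN: "X1 * X2 \<in> carrier_mat N N"
    if "X1 \<in> carrier_mat N N" "X2 \<in> carrier_mat N N" for X1 X2 :: "real mat"
    using that by simp
  have "transpose_mat M = transpose_mat Z * transpose_mat (Z * V)"
    unfolding M_def by (rule transpose_mult[OF mult_carrier_mat[OF Zc Vc] Zc])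
  also have "\<dots> = M" unfolding M_def using transpose_mult[OF Zc Vc] Zt Vt Zc Vc by simp
  finally have Mt: "transpose_mat M = M" .
  have "transpose_mat K = transpose_mat (transpose_mat E) * transpose_mat (E * M)"
    unfolding K_def M_def[symmetric] by (rule transpose_mult[OF mult_carrier_mat[OF E M] Et])
  also have "\<dots> = K" unfolding K_def M_def[symmetric] using transpose_mult[OF E M] Mt E M by simp
  finally show "sym_mat N K" unfolding sym_mat_def using K by simp
  have "Z * V * Z * V = (M * transpose_mat E * W) * E"
    unfolding M_def Ve using Zc Vc E Et W by (simp add: assocN multN)
  then show "mtrace (Z * V * Z * V) = mtrace (K * W)"
    using mtrace_mult_comm[of "M * transpose_mat E * W" N N E] M E Et W
    by (simp add: K_def M_def[symmetric] assocN multN)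
  have "M * Y = Z * V * (Z * Y)" unfolding M_def by (rule assoc_mult_mat[OF mult_carrier_mat[OF Zc Vc] Zc Yc])
  then have MY: "M * Y = Z * V" using ZY Zc Vc by simp
  have "Z * V * Z * V = M * Y * (M * Y)" unfolding MY using Zc Vc by (simp add: assocN multN)
  also have "\<dots> = (M * transpose_mat E * D * E * M * transpose_mat E * D) * E"
    unfolding Ye using M E Et D by (simp add: assocN multN)
  finally show "mtrace (Z * V * Z * V) = mtrace (K * D * (K * D))"
    using mtrace_mult_comm[of "M * transpose_mat E * D * E * M * transpose_mat E * D" N N E] M E Et D
    by (simp add: K_def M_def[symmetric] assocN multN)
qed

text \<open>The bound of \<open>mtrace_block_variational_le\<close> holds for every symmetric \<open>K\<close>, while for
  \<open>K = E Y\<^sup>-\<^sup>1 V Y\<^sup>-\<^sup>1 E\<^sup>T\<close> both of its traces equal \<open>tr(Y\<^sup>-\<^sup>1VY\<^sup>-\<^sup>1V)\<close>; this avoids inverting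
  the block diagonal factor.\<close>

lemma mtrace_inverse_shear_congruence_le:
  fixes Y1 t A Y Z V V3 C :: "real mat"
  assumes Y1: "sym_mat n1 Y1" "nonneg_ldl n1 Y1" "rayleigh_ge n1 Y1 a" and a: "0 < a"
    and t: "sym_mat n2 t" "nonneg_ldl n2 t" "rayleigh_ge n2 t lam" and lam: "0 < lam"
    and A: "A \<in> carrier_mat n1 n2"
    and Ye: "Y = transpose_mat (shear_mat n1 n2 A) * four_block_mat Y1 (0\<^sub>m n1 n2) (0\<^sub>m n2 n1) t * shear_mat n1 n2 A"
    and Z: "sym_mat (n1 + n2) Z" and ZY: "Z * Y = 1\<^sub>m (n1 + n2)" and V: "sym_mat (n1 + n2) V"
    and V3: "V3 \<in> carrier_mat n1 n2" and C: "C \<in> carrier_mat n2 n2"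
    and Ve: "V = transpose_mat (shear_mat n1 n2 A) * four_block_mat (0\<^sub>m n1 n1) V3 (transpose_mat V3) C * shear_mat n1 n2 A"
  shows "mtrace (Z * V * Z * V) \<le> 2 * frob2 V3 / (a * lam) + frob2 C / lam\<^sup>2"
proof -
  have "Y1 \<in> carrier_mat n1 n1" "t \<in> carrier_mat n2 n2" using Y1(1) t(1) unfolding sym_mat_def by auto
  then have D: "four_block_mat Y1 (0\<^sub>m n1 n2) (0\<^sub>m n2 n1) t \<in> carrier_mat (n1 + n2) (n1 + n2)"
    and W: "four_block_mat (0\<^sub>m n1 n1) V3 (transpose_mat V3) C \<in> carrier_mat (n1 + n2) (n1 + n2)"
    using V3 C by auto
  note K = mtrace_inverse_congruence[OF shear_mat_carrier[OF A] D W Z V ZY Ye Ve]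
  define K where "K = shear_mat n1 n2 A * (Z * V * Z) * transpose_mat (shear_mat n1 n2 A)"
  note K_blocks = four_block_blk[OF K(1)[folded K_def]]
  have "2 * mtrace (K * four_block_mat (0\<^sub>m n1 n1) V3 (transpose_mat V3) C)
      - mtrace (K * four_block_mat Y1 (0\<^sub>m n1 n2) (0\<^sub>m n2 n1) t * (K * four_block_mat Y1 (0\<^sub>m n1 n2) (0\<^sub>m n2 n1) t))
      \<le> 2 * frob2 V3 / (a * lam) + frob2 C / lam\<^sup>2"
    by (subst (1 2 3) K_blocks, rule mtrace_block_variational_le[OF sym_mat_blk(1)[OF K(1)[folded K_def]]
          blk_carrier(2) sym_mat_blk(2)[OF K(1)[folded K_def]] Y1 a t lam V3 C])
      (use K(1) in \<open>simp add: K_def sym_mat_def\<close>)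
  then show ?thesis using K(2,3) unfolding K_def by simp
qed

section \<open>Vertical tangent vectors\<close>

lemma zero_derivative_blk1:
  fixes X V :: "real mat"
  assumes X: "X \<in> carrier_mat g g" and V: "V \<in> carrier_mat g g" and k: "k \<le> g"
    and d: "\<forall>i<k. \<forall>j<k. ((\<lambda>s. blk1 k (X + s \<cdot>\<^sub>m V) $$ (i, j)) has_real_derivative 0) (at 0)"
  shows "blk1 k V = 0\<^sub>m k k"
proof (rule eq_matI)
  fix i j assume "i < dim_row (0\<^sub>m k k :: real mat)" "j < dim_col (0\<^sub>m k k :: real mat)"
  then have i: "i < k" and j: "j < k" by auto
  have "(\<lambda>s. blk1 k (X + s \<cdot>\<^sub>m V) $$ (i, j)) = (\<lambda>s. X $$ (i, j) + s * V $$ (i, j))"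
    using i j k X V unfolding blk1_def by auto
  then have "((\<lambda>s. X $$ (i, j) + s * V $$ (i, j)) has_real_derivative 0) (at 0)" using d i j by metis
  moreover have "((\<lambda>s. X $$ (i, j) + s * V $$ (i, j)) has_real_derivative V $$ (i, j)) (at 0)"
    by (auto intro!: derivative_eq_intros)
  ultimately have "V $$ (i, j) = 0" by (metis DERIV_unique)
  then show "blk1 k V $$ (i, j) = 0\<^sub>m k k $$ (i, j)" using i j unfolding blk1_def by simp
qed (auto simp: blk1_def)

text \<open>The block \<open>C\<close> of \<open>W\<close> in the overview at the top.\<close>

definition sheared_blk2 :: "nat \<Rightarrow> real mat \<Rightarrow> real mat \<Rightarrow> real mat" where
  "sheared_blk2 k V A = blk2 k V - (transpose_mat (blk3 k V) * A + transpose_mat A * blk3 k V)"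

lemma sheared_blk2_carrier:
  "V \<in> carrier_mat (n1 + n2) (n1 + n2) \<Longrightarrow> A \<in> carrier_mat n1 n2 \<Longrightarrow> sheared_blk2 n1 V A \<in> carrier_mat n2 n2"
  unfolding sheared_blk2_def using blk_carrier[of V n1 n2] by (auto intro: minus_carrier_mat)

lemma shear_form_blk1_zero:
  assumes V: "sym_mat (n1 + n2) V" and V1: "blk1 n1 V = 0\<^sub>m n1 n1" and A: "A \<in> carrier_mat n1 n2"
  shows "V = transpose_mat (shear_mat n1 n2 A)
    * four_block_mat (0\<^sub>m n1 n1) (blk3 n1 V) (transpose_mat (blk3 n1 V)) (sheared_blk2 n1 V A) * shear_mat n1 n2 A"
proof -
  have Vc: "V \<in> carrier_mat (n1 + n2) (n1 + n2)" using V unfolding sym_mat_def by auto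
  note V3 = blk_carrier(2)[OF Vc] and V2 = blk_carrier(3)[OF Vc]
  have "blk2 n1 V = transpose_mat (blk3 n1 V) * A + transpose_mat A * blk3 n1 V + sheared_blk2 n1 V A"
    unfolding sheared_blk2_def using V3 V2 A by (auto intro!: eq_matI)
  then have "V = four_block_mat (0\<^sub>m n1 n1) (blk3 n1 V) (transpose_mat (blk3 n1 V))
      (transpose_mat (blk3 n1 V) * A + transpose_mat A * blk3 n1 V + sheared_blk2 n1 V A)"
    using four_block_blk[OF V] V1 by simp
  then show ?thesis using shear_zero_corner[OF A V3 sheared_blk2_carrier[OF Vc A]] by simp
qed

lemma schur_add_entry:
  fixes Y V :: "real mat"
  assumes Y: "Y \<in> carrier_mat (k + n) (k + n)" and V: "V \<in> carrier_mat (k + n) (k + n)"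
    and V1: "blk1 k V = 0\<^sub>m k k" and P: "minv (blk1 k Y) \<in> carrier_mat k k" and i: "i < n" and j: "j < n"
  shows "schur k (Y + s \<cdot>\<^sub>m V) $$ (i, j) = blk2 k Y $$ (i, j) + s * blk2 k V $$ (i, j)
    - (\<Sum>b<k. (\<Sum>a<k. (blk3 k Y $$ (a, i) + s * blk3 k V $$ (a, i)) * minv (blk1 k Y) $$ (a, b))
        * (blk3 k Y $$ (b, j) + s * blk3 k V $$ (b, j)))"
proof -
  define P where "P = minv (blk1 k Y)"
  define B where "B = blk3 k (Y + s \<cdot>\<^sub>m V)"
  have B: "B \<in> carrier_mat k n" unfolding B_def blk3_def using Y V by auto
  have Bt: "transpose_mat B \<in> carrier_mat n k" using B by simp
  have "V $$ (a, b) = 0" if "a < k" "b < k" for a b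
    using arg_cong[OF V1, of "\<lambda>M. M $$ (a, b)"] that unfolding blk1_def by simp
  then have "blk1 k (Y + s \<cdot>\<^sub>m V) = blk1 k Y" unfolding blk1_def using Y V by (intro eq_matI) auto
  then have "schur k (Y + s \<cdot>\<^sub>m V) = blk2 k (Y + s \<cdot>\<^sub>m V) - transpose_mat B * P * B"
    unfolding schur_def B_def P_def by simp
  moreover have "(transpose_mat B * P * B) $$ (i, j) = (\<Sum>b<k. (\<Sum>a<k. B $$ (a, i) * P $$ (a, b)) * B $$ (b, j))"
    using index_mult_mat_sum[OF mult_carrier_mat[OF Bt P[folded P_def]] B i j]
      index_mult_mat_sum[OF Bt P[folded P_def] i] B i by (auto intro!: sum.cong)
  ultimately show ?thesis
    unfolding P_def[symmetric] B_def using i j Y V P by (simp add: blk2_def blk3_def)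
qed

lemma sheared_blk2_entry:
  fixes V Y3 P :: "real mat"
  assumes V: "V \<in> carrier_mat (k + n) (k + n)" and P: "sym_mat k P" and Y3: "Y3 \<in> carrier_mat k n"
    and i: "i < n" and j: "j < n"
  shows "sheared_blk2 k V (P * Y3) $$ (i, j) = blk2 k V $$ (i, j)
    - (\<Sum>b<k. (\<Sum>a<k. blk3 k V $$ (a, i) * P $$ (a, b)) * Y3 $$ (b, j)
        + (\<Sum>a<k. Y3 $$ (a, i) * P $$ (a, b)) * blk3 k V $$ (b, j))"
proof -
  have Pc: "P \<in> carrier_mat k k" using P unfolding sym_mat_def by simp
  have V3: "blk3 k V \<in> carrier_mat k n" using blk_carrier[OF V] by auto
  have A: "P * Y3 \<in> carrier_mat k n" using Pc Y3 by simp
  have "(transpose_mat (blk3 k V) * (P * Y3)) $$ (i, j)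
      = (\<Sum>a<k. blk3 k V $$ (a, i) * (\<Sum>b<k. P $$ (a, b) * Y3 $$ (b, j)))"
    using index_mult_mat_sum[OF transpose_carrier_mat[THEN iffD2, OF V3] A i j]
      index_mult_mat_sum[OF Pc Y3 _ j] V3 i by (auto intro!: sum.cong)
  also have "\<dots> = (\<Sum>b<k. (\<Sum>a<k. blk3 k V $$ (a, i) * P $$ (a, b)) * Y3 $$ (b, j))"
    by (simp add: sum_distrib_left sum_distrib_right mult.assoc, rule sum.swap)
  finally have t1: "(transpose_mat (blk3 k V) * (P * Y3)) $$ (i, j) = \<dots>" .
  have "(transpose_mat (P * Y3) * blk3 k V) $$ (i, j) = (\<Sum>b<k. (P * Y3) $$ (b, i) * blk3 k V $$ (b, j))"
    using index_mult_mat_sum[OF transpose_carrier_mat[THEN iffD2, OF A] V3 i j] A i Pc Y3 by (auto intro!: sum.cong)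
  also have "\<dots> = (\<Sum>b<k. (\<Sum>a<k. Y3 $$ (a, i) * P $$ (a, b)) * blk3 k V $$ (b, j))"
    using index_mult_mat_sum[OF Pc Y3 _ i] sym_mat_entry[OF P] by (auto intro!: sum.cong simp: mult.commute)
  finally have t2: "(transpose_mat (P * Y3) * blk3 k V) $$ (i, j) = \<dots>" .
  have "transpose_mat (P * Y3) * blk3 k V \<in> carrier_mat n n" using V3 A by auto
  then show ?thesis unfolding sheared_blk2_def sum.distrib t1[symmetric] t2[symmetric]
    using i j by (simp only: carrier_matD index_minus_mat index_add_mat)
qed

lemma has_real_derivative_quadratic_sum:
  fixes y v z w :: "nat \<Rightarrow> real" and p :: "nat \<Rightarrow> nat \<Rightarrow> real"
  shows "((\<lambda>s. c + s * d - (\<Sum>b<k. (\<Sum>a<k. (y a + s * v a) * p a b) * (z b + s * w b)))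
    has_real_derivative d - (\<Sum>b<k. (\<Sum>a<k. v a * p a b) * z b + (\<Sum>a<k. y a * p a b) * w b)) (at 0)"
  by (auto intro!: derivative_eq_intros simp: sum.distrib algebra_simps)

lemma has_derivative_schur_entry:
  fixes Y V :: "real mat"
  assumes Y: "Y \<in> carrier_mat (k + n) (k + n)" and V: "V \<in> carrier_mat (k + n) (k + n)"
    and V1: "blk1 k V = 0\<^sub>m k k" and P: "sym_mat k (minv (blk1 k Y))" and i: "i < n" and j: "j < n"
  shows "((\<lambda>s. schur k (Y + s \<cdot>\<^sub>m V) $$ (i, j))
    has_real_derivative sheared_blk2 k V (minv (blk1 k Y) * blk3 k Y) $$ (i, j)) (at 0)"
proof -
  have Pc: "minv (blk1 k Y) \<in> carrier_mat k k" using P unfolding sym_mat_def by simp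
  show ?thesis
    unfolding schur_add_entry[OF Y V V1 Pc i j] sheared_blk2_entry[OF V P blk_carrier(2)[OF Y] i j]
    by (rule has_real_derivative_quadratic_sum)
qed

lemma vertical_blk1_zero:
  assumes V: "vertical n1 X Y VX VY" and X: "X \<in> carrier_mat g g" and Y: "Y \<in> carrier_mat g g"
    and VX: "VX \<in> carrier_mat g g" and VY: "VY \<in> carrier_mat g g" and k: "n1 \<le> g"
  shows "blk1 n1 VX = 0\<^sub>m n1 n1" "blk1 n1 VY = 0\<^sub>m n1 n1"
  using V zero_derivative_blk1[OF X VX k] zero_derivative_blk1[OF Y VY k] unfolding vertical_def by auto

lemma vertical_sheared_blk2_zero:
  assumes V: "vertical n1 X Y VX VY" and Y: "Y \<in> carrier_mat (n1 + n2) (n1 + n2)"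
    and VY: "VY \<in> carrier_mat (n1 + n2) (n1 + n2)" and V1: "blk1 n1 VY = 0\<^sub>m n1 n1"
    and P: "sym_mat n1 (minv (blk1 n1 Y))"
  shows "sheared_blk2 n1 VY (minv (blk1 n1 Y) * blk3 n1 Y) = 0\<^sub>m n2 n2"
proof -
  have A: "minv (blk1 n1 Y) * blk3 n1 Y \<in> carrier_mat n1 n2"
    using P blk_carrier(2)[OF Y] unfolding sym_mat_def by (auto intro: mult_carrier_mat)
  note C = sheared_blk2_carrier[OF VY A]
  show ?thesis
  proof (rule eq_matI)
    fix i j assume "i < dim_row (0\<^sub>m n2 n2 :: real mat)" "j < dim_col (0\<^sub>m n2 n2 :: real mat)"
    then have i: "i < n2" and j: "j < n2" by auto
    have "((\<lambda>s. schur n1 (Y + s \<cdot>\<^sub>m VY) $$ (i, j)) has_real_derivative 0) (at 0)"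
      using V Y i j unfolding vertical_def by auto
    then show "sheared_blk2 n1 VY (minv (blk1 n1 Y) * blk3 n1 Y) $$ (i, j) = 0\<^sub>m n2 n2 $$ (i, j)"
      using DERIV_unique[OF has_derivative_schur_entry[OF Y VY V1 P i j]] i j by simp
  qed (use C in auto)
qed

lemma frob2_sheared_blk2_le:
  assumes V: "V \<in> carrier_mat (n1 + n2) (n1 + n2)" and A: "A \<in> carrier_mat n1 n2"
  shows "frob2 (sheared_blk2 n1 V A) \<le> 3 * frob2 (blk2 n1 V) + 6 * frob2 A * frob2 (blk3 n1 V)"
proof -
  note V3 = blk_carrier(2)[OF V] and V2 = blk_carrier(3)[OF V]
  have V3t: "transpose_mat (blk3 n1 V) \<in> carrier_mat n2 n1" and At: "transpose_mat A \<in> carrier_mat n2 n1"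
    using V3 A by auto
  have "frob2 (transpose_mat (blk3 n1 V) * A) \<le> frob2 A * frob2 (blk3 n1 V)"
    using frob2_mult_le[OF V3t A] by (simp add: frob2_transpose mult.commute)
  moreover have "frob2 (transpose_mat A * blk3 n1 V) \<le> frob2 A * frob2 (blk3 n1 V)"
    using frob2_mult_le[OF At V3] by (simp add: frob2_transpose)
  ultimately show ?thesis
    using frob2_diff_add_le[OF V2 mult_carrier_mat[OF V3t A] mult_carrier_mat[OF At V3]]
    unfolding sheared_blk2_def by linarith
qed

section \<open>The estimate on a fibre\<close>

lemma vertical_wp_norm2_le:
  fixes X Y VX VY Y1 t :: "real mat"
  assumes Y1: "pos_def_mat n1 Y1" "nonneg_ldl n1 Y1" "rayleigh_ge n1 Y1 a" and a: "0 < a"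
    and t: "pos_def_mat n2 t" "nonneg_ldl n2 t" "rayleigh_ge n2 t lam" and lam: "0 < lam"
    and Y: "pos_def_mat (n1 + n2) Y" "blk1 n1 Y = Y1" "schur n1 Y = t"
    and X: "X \<in> carrier_mat (n1 + n2) (n1 + n2)"
    and V: "sym_mat (n1 + n2) VX" "sym_mat (n1 + n2) VY" "vertical n1 X Y VX VY"
    and alpha: "frob2 (minv Y1 * blk3 n1 Y) \<le> \<alpha>"
  shows "wp_norm2 Y VX VY \<le> (frob2 (blk3 n1 VX) + frob2 (blk3 n1 VY)) / (a * lam)
    + (3 * frob2 (blk2 n1 VX) + 6 * \<alpha> * frob2 (blk3 n1 VX)) / (2 * lam\<^sup>2)"
proof -
  have S1: "sym_mat n1 Y1" and S2: "sym_mat n2 t" and SY: "sym_mat (n1 + n2) Y"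
    using Y1(1) t(1) Y(1) unfolding pos_def_mat_def by auto
  have Yc: "Y \<in> carrier_mat (n1 + n2) (n1 + n2)"
    and VXc: "VX \<in> carrier_mat (n1 + n2) (n1 + n2)" and VYc: "VY \<in> carrier_mat (n1 + n2) (n1 + n2)"
    using SY V(1,2) unfolding sym_mat_def by auto
  have PS: "sym_mat n1 (minv Y1)" using sym_mat_minv[OF S1 pos_def_det_nonzero[OF Y1(1)]] .
  define A where "A = minv Y1 * blk3 n1 Y"
  have Ac: "A \<in> carrier_mat n1 n2" unfolding A_def using PS blk_carrier(2)[OF Yc] unfolding sym_mat_def by auto
  have Ye: "Y = transpose_mat (shear_mat n1 n2 A) * four_block_mat Y1 (0\<^sub>m n1 n2) (0\<^sub>m n2 n1) t
      * shear_mat n1 n2 A"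
    using shear_schur_factorization[OF SY Y1(1)[folded Y(2)]] unfolding A_def Y(2,3) .
  define Z where "Z = minv Y"
  have ZS: "sym_mat (n1 + n2) Z" and ZY: "Z * Y = 1\<^sub>m (n1 + n2)"
    unfolding Z_def using sym_mat_minv[OF SY] minv_inverse[OF Yc] pos_def_det_nonzero[OF Y(1)] by auto
  note V1 = vertical_blk1_zero[OF V(3) X Yc VXc VYc le_add1]
  note V3X = blk_carrier(2)[OF VXc] and V3Y = blk_carrier(2)[OF VYc]
  have trX: "mtrace (Z * VX * Z * VX) \<le> 2 * frob2 (blk3 n1 VX) / (a * lam) + frob2 (sheared_blk2 n1 VX A) / lam\<^sup>2"
    by (rule mtrace_inverse_shear_congruence_le[OF S1 Y1(2,3) a S2 t(2,3) lam Ac Ye ZS ZY V(1) V3X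
          sheared_blk2_carrier[OF VXc Ac] shear_form_blk1_zero[OF V(1) V1(1) Ac]])
  have trY: "mtrace (Z * VY * Z * VY) \<le> 2 * frob2 (blk3 n1 VY) / (a * lam) + frob2 (sheared_blk2 n1 VY A) / lam\<^sup>2"
    by (rule mtrace_inverse_shear_congruence_le[OF S1 Y1(2,3) a S2 t(2,3) lam Ac Ye ZS ZY V(2) V3Y
          sheared_blk2_carrier[OF VYc Ac] shear_form_blk1_zero[OF V(2) V1(2) Ac]])
  have "sheared_blk2 n1 VY A = 0\<^sub>m n2 n2"
    using vertical_sheared_blk2_zero[OF V(3) Yc VYc V1(2)] PS unfolding A_def Y(2) by simp
  then have CY: "frob2 (sheared_blk2 n1 VY A) = 0" unfolding frob2_def by simp
  have "6 * frob2 A * frob2 (blk3 n1 VX) \<le> 6 * \<alpha> * frob2 (blk3 n1 VX)"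
    using alpha frob2_nonneg[of "blk3 n1 VX"] unfolding A_def by (intro mult_right_mono) auto
  then have "frob2 (sheared_blk2 n1 VX A) \<le> 3 * frob2 (blk2 n1 VX) + 6 * \<alpha> * frob2 (blk3 n1 VX)"
    using frob2_sheared_blk2_le[OF VXc Ac] by linarith
  then have CX: "frob2 (sheared_blk2 n1 VX A) / lam\<^sup>2 \<le> (3 * frob2 (blk2 n1 VX) + 6 * \<alpha> * frob2 (blk3 n1 VX)) / lam\<^sup>2"
    by (simp add: divide_right_mono)
  have "wp_norm2 Y VX VY = (mtrace (Z * VX * Z * VX) + mtrace (Z * VY * Z * VY)) / 2"
    unfolding wp_norm2_def Z_def by simp
  also have "\<dots> \<le> (2 * frob2 (blk3 n1 VX) / (a * lam) + 2 * frob2 (blk3 n1 VY) / (a * lam)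
      + (3 * frob2 (blk2 n1 VX) + 6 * \<alpha> * frob2 (blk3 n1 VX)) / lam\<^sup>2) / 2"
    using trX trY[unfolded CY] CX by (intro divide_right_mono) auto
  also have "\<dots> = (frob2 (blk3 n1 VX) + frob2 (blk3 n1 VY)) / (a * lam)
      + (3 * frob2 (blk2 n1 VX) + 6 * \<alpha> * frob2 (blk3 n1 VX)) / (2 * lam\<^sup>2)"
    using a lam by (simp add: field_simps)
  finally show ?thesis .
qed

definition shear_frob2_bound :: "nat \<Rightarrow> nat \<Rightarrow> real \<Rightarrow> real mat \<Rightarrow> real" where
  "shear_frob2_bound n1 n2 u Y1 = frob2 (minv Y1)
     * (real n1 * real n2 * (real (n1 + n2) * (max 1 u)\<^sup>2 * (\<Sum>m<n1. \<bar>Y1 $$ (m, m)\<bar>))\<^sup>2)"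

lemma shear_frob2_bound_nonneg: "0 \<le> shear_frob2_bound n1 n2 u Y1"
  unfolding shear_frob2_bound_def by (simp add: frob2_nonneg)

lemma siegel_shear_frob2_le:
  fixes Y :: "real mat"
  assumes u: "0 < u" and J: "jacobi_siegel (n1 + n2) u Y" and P: "minv (blk1 n1 Y) \<in> carrier_mat n1 n1"
  shows "frob2 (minv (blk1 n1 Y) * blk3 n1 Y) \<le> shear_frob2_bound n1 n2 u (blk1 n1 Y)"
proof -
  have Y3: "blk3 n1 Y \<in> carrier_mat n1 n2" using J unfolding jacobi_siegel_def blk3_def by auto
  have "frob2 (blk3 n1 Y)
      \<le> real n1 * real n2 * (real (n1 + n2) * (max 1 u)\<^sup>2 * (\<Sum>m<n1. \<bar>blk1 n1 Y $$ (m, m)\<bar>))\<^sup>2"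
  proof (rule frob2_le_entry_bound[OF Y3])
    fix i j assume "i < n1" "j < n2"
    then show "\<bar>blk3 n1 Y $$ (i, j)\<bar> \<le> real (n1 + n2) * (max 1 u)\<^sup>2 * (\<Sum>m<n1. \<bar>blk1 n1 Y $$ (m, m)\<bar>)"
      using jacobi_siegel_entry_bound[OF u J le_add1, of i "j + n1"] J
      unfolding jacobi_siegel_def blk1_def blk3_def by auto
  qed
  then show ?thesis unfolding shear_frob2_bound_def
    using frob2_mult_le[OF P Y3] frob2_nonneg[of "minv (blk1 n1 Y)"] by (meson mult_left_mono order_trans)
qed

lemma wp_bound_coefficients:
  fixes a c lam \<alpha> f3 f3' f2 C :: real
  assumes a: "0 < a" and c: "0 < c" and lc: "c \<le> lam" and al: "0 \<le> \<alpha>"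
    and f: "0 \<le> f3" "0 \<le> f3'" "0 \<le> f2" and C: "1 / a + 3 * \<alpha> / c \<le> C" "3 / 2 \<le> C"
  shows "(f3 + f3') / (a * lam) + (3 * f2 + 6 * \<alpha> * f3) / (2 * lam\<^sup>2)
    \<le> C / lam * (f3 + f3') + C / lam\<^sup>2 * f2"
proof -
  have lam: "0 < lam" using c lc by simp
  have "(f3 + f3') / (a * lam) + (3 * f2 + 6 * \<alpha> * f3) / (2 * lam\<^sup>2)
      = 1 / a / lam * (f3 + f3') + 3 * \<alpha> * f3 / lam\<^sup>2 + 3 / 2 / lam\<^sup>2 * f2"
    using a lam by (simp add: field_simps power2_eq_square)
  also have "3 * \<alpha> * f3 / lam\<^sup>2 \<le> 3 * \<alpha> * f3 / (c * lam)"
    using lc lam c al f by (intro divide_left_mono) (auto simp: power2_eq_square mult_right_mono)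
  also have "\<dots> \<le> 3 * \<alpha> * f3 / (c * lam) + 3 * \<alpha> * f3' / (c * lam)"
    using al f c lam by simp
  also have "1 / a / lam * (f3 + f3') + (3 * \<alpha> * f3 / (c * lam) + 3 * \<alpha> * f3' / (c * lam)) + 3 / 2 / lam\<^sup>2 * f2
      = (1 / a + 3 * \<alpha> / c) / lam * (f3 + f3') + 3 / 2 / lam\<^sup>2 * f2"
    using a c lam by (simp add: field_simps)
  also have "\<dots> \<le> C / lam * (f3 + f3') + C / lam\<^sup>2 * f2"
    using C f lam by (intro add_mono mult_right_mono divide_right_mono) auto
  finally show ?thesis by simp
qed

lemma siegel_set_pos:
  assumes "siegel_set g u X Y" and "1 \<le> g"
  shows "0 < u"
proof -
  have "\<bar>X $$ (0, 0)\<bar> < u" using assms unfolding siegel_set_def by auto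
  then show ?thesis by linarith
qed

lemma siegel_fibre_wp_norm2_le:
  fixes X Y VX VY Y1 t :: "real mat"
  assumes u: "0 < u" and n2: "1 \<le> n2"
    and Y1: "pos_def_mat n1 Y1" "jacobi_siegel n1 u Y1" "rayleigh_ge n1 Y1 a" and a: "0 < a"
    and c: "0 < c" "\<And>t. jacobi_siegel n2 u t \<Longrightarrow> rayleigh_ge n2 t c"
    and C: "1 / a + 3 * shear_frob2_bound n1 n2 u Y1 / c \<le> C" "3 / 2 \<le> C"
    and t: "siegel_set_plus n2 u t"
    and Y: "siegel_set (n1 + n2) u X Y" "blk1 n1 Y = Y1" "schur n1 Y = t"
    and V: "sym_mat (n1 + n2) VX" "sym_mat (n1 + n2) VY" "vertical n1 X Y VX VY"
  shows "wp_norm2 Y VX VY \<le> C / lambda_min t * (frob2 (blk3 n1 VX) + frob2 (blk3 n1 VY))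
    + C / (lambda_min t)\<^sup>2 * frob2 (blk2 n1 VX)"
proof -
  have tJ: "pos_def_mat n2 t" "jacobi_siegel n2 u t" using t unfolding siegel_set_plus_def by auto
  have YJ: "pos_def_mat (n1 + n2) Y" "jacobi_siegel (n1 + n2) u Y" and X: "X \<in> carrier_mat (n1 + n2) (n1 + n2)"
    using Y(1) unfolding siegel_set_def siegel_space_def sym_mat_def by auto
  have lam: "rayleigh_ge n2 t (lambda_min t)" "c \<le> lambda_min t"
    using lambda_min_rayleigh[OF tJ(1) n2] c(2)[OF tJ(2)] by auto
  have "minv Y1 \<in> carrier_mat n1 n1"
    using sym_mat_minv pos_def_det_nonzero[OF Y1(1)] Y1(1) unfolding pos_def_mat_def sym_mat_def by blast
  then have "frob2 (minv Y1 * blk3 n1 Y) \<le> shear_frob2_bound n1 n2 u Y1"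
    using siegel_shear_frob2_le[OF u YJ(2)] unfolding Y(2) by blast
  with vertical_wp_norm2_le[OF Y1(1) jacobi_siegel_nonneg_ldl[OF u Y1(2)] Y1(3) a tJ(1)
      jacobi_siegel_nonneg_ldl[OF u tJ(2)] lam(1) _ YJ(1) Y(2,3) X V]
  have "wp_norm2 Y VX VY \<le> (frob2 (blk3 n1 VX) + frob2 (blk3 n1 VY)) / (a * lambda_min t)
      + (3 * frob2 (blk2 n1 VX) + 6 * shear_frob2_bound n1 n2 u Y1 * frob2 (blk3 n1 VX)) / (2 * (lambda_min t)\<^sup>2)"
    using c(1) lam(2) by simp
  also have "\<dots> \<le> C / lambda_min t * (frob2 (blk3 n1 VX) + frob2 (blk3 n1 VY)) + C / (lambda_min t)\<^sup>2 * frob2 (blk2 n1 VX)"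
    by (rule wp_bound_coefficients[OF a c(1) lam(2) shear_frob2_bound_nonneg frob2_nonneg frob2_nonneg frob2_nonneg C])
  finally show ?thesis .
qed

theorem lemma3p13:
  fixes g g' :: nat and u :: real and X1 Y1 :: "real mat"
  assumes "1 \<le> g" and "g' < g"
    and "siegel_set g' u X1 Y1"
  shows "\<exists>C > 0. \<forall>t X Y VX VY.
     siegel_set_plus (g - g') u t \<and>
     siegel_set g u X Y \<and> blk1 g' X = X1 \<and> blk1 g' Y = Y1 \<and> schur g' Y = t \<and>
     sym_mat g VX \<and> sym_mat g VY \<and> vertical g' X Y VX VY \<longrightarrow>
     wp_norm2 Y VX VY \<le>
       C / lambda_min t * (frob2 (blk3 g' VX) + frob2 (blk3 g' VY))
       + C / (lambda_min t)\<^sup>2 * frob2 (blk2 g' VX)"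
proof (cases "0 < u")
  case False
  have "\<not> siegel_set g u X Y" for X Y
  proof
    assume "siegel_set g u X Y"
    then have "0 < u" using assms(1) by (rule siegel_set_pos)
    with False show False ..
  qed
  then show ?thesis by (intro exI[of _ 1]) auto
next
  case u: True
  define n2 where "n2 = g - g'"
  have g: "g = g' + n2" and n2: "1 \<le> n2" unfolding n2_def using assms(2) by auto
  have Y1: "pos_def_mat g' Y1" "jacobi_siegel g' u Y1"
    using assms(3) unfolding siegel_set_def siegel_space_def by auto
  obtain a where a: "0 < a" "rayleigh_ge g' Y1 a"
    using invertible_psd_rayleigh_ge pos_def_quad_form_nonneg[OF Y1(1)] pos_def_det_nonzero[OF Y1(1)] Y1(1)
    unfolding pos_def_mat_def by blast
  obtain c where c: "0 < c" "\<And>t. jacobi_siegel n2 u t \<Longrightarrow> rayleigh_ge n2 t c"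
    using jacobi_siegel_uniform_rayleigh[OF u] by blast
  define C where "C = 1 / a + 3 * shear_frob2_bound g' n2 u Y1 / c + 3 / 2"
  have "0 < 1 / a" "0 \<le> 3 * shear_frob2_bound g' n2 u Y1 / c" using a c shear_frob2_bound_nonneg by auto
  then have C: "1 / a + 3 * shear_frob2_bound g' n2 u Y1 / c \<le> C" "3 / 2 \<le> C" "0 < C"
    unfolding C_def by linarith+
  show ?thesis
  proof (intro exI[of _ C] conjI allI impI C(3))
    fix t X Y VX VY
    assume "siegel_set_plus (g - g') u t \<and> siegel_set g u X Y \<and> blk1 g' X = X1 \<and> blk1 g' Y = Y1 \<and>
      schur g' Y = t \<and> sym_mat g VX \<and> sym_mat g VY \<and> vertical g' X Y VX VY"
    then have fibre: "siegel_set_plus n2 u t" "siegel_set (g' + n2) u X Y" "blk1 g' Y = Y1" "schur g' Y = t"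
      "sym_mat (g' + n2) VX" "sym_mat (g' + n2) VY" "vertical g' X Y VX VY"
      unfolding g[symmetric] n2_def[symmetric] by auto
    show "wp_norm2 Y VX VY \<le> C / lambda_min t * (frob2 (blk3 g' VX) + frob2 (blk3 g' VY))
        + C / (lambda_min t)\<^sup>2 * frob2 (blk2 g' VX)"
      by (rule siegel_fibre_wp_norm2_le[OF u n2 Y1 a(2,1) c C(1,2) fibre])
  qed
qed

end
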